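(* Suppose $\mathcal E$ and $\mathcal F$ are spatial product systems with normalized units $u$ and $v$ respectively. Then $R^{\mathcal E\otimes\mathcal F}_{u\otimes v}=(R^{\mathcal E}_u\otimes v)\oplus(u\otimes R^{\mathcal F}_v)$; that is, the roots of the unit $u\otimes v=(u_t\otimes v_t)_{t>0}$ of $\mathcal E\otimes\mathcal F$ are exactly the sections $(a_t\otimes v_t+u_t\otimes b_t)_{t>0}$ with $a$ a root of $u$ and $b$ a root of $v$.
   Context: Product systems are measurable families of separable Hilbert spaces $(\mathcal E_t)_{t>0}$ with associative unitaries $W_{s,t}:\mathcal E_{s+t}\to\mathcal E_s\otimes\mathcal E_t$; a unit is a measurable section $(u_t)$ of nonzero vectors with $W_{s,t}u_{s+t}=u_s\otimes u_t$, normalized if $\|u_t\|=1$; spatial means having a unit. $\mathcal E\otimes\mathcal F=(\mathcal E_t\otimes\mathcal F_t)_{t>0}$ is the tensor product product system. An additive unit of a unit $u$ is a measurable section $(a_t)$ with $W_{s,t}a_{s+t}=a_s\otimes u_t+u_s\otimes a_t$ for all $s,t>0$; a root additionally satisfies $\langle a_t,u_t\rangle=0$ for all $t$; $R^{\mathcal E}_u$ is the Hilbert space of roots of $u$ (inner product $\langle a,b\rangle=\langle a_1,b_1\rangle$). *)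

theory Defs
  imports "HOL-Analysis.Analysis"
begin

text \<open>Concrete realisation: every separable Hilbert space is realised as a closed
subspace of the sequence space l2 over a countable index type; tensor products of
l2 spaces are l2 spaces over product index types.\<close>

definition l2 :: "('i \<Rightarrow> complex) set" where
  "l2 = {f. (\<lambda>i. (cmod (f i))^2) summable_on UNIV}"

definition inner_l2 :: "('i \<Rightarrow> complex) \<Rightarrow> ('i \<Rightarrow> complex) \<Rightarrow> complex" where
  "inner_l2 f g = infsum (\<lambda>i. cnj (f i) * g i) UNIV"

definition norm_l2 :: "('i \<Rightarrow> complex) \<Rightarrow> real" where
  "norm_l2 f = sqrt (infsum (\<lambda>i. (cmod (f i))^2) UNIV)"

definition closed_subspace :: "('i \<Rightarrow> complex) set \<Rightarrow> bool" where
  "closed_subspace S \<longleftrightarrow> S \<subseteq> l2 \<and> (\<lambda>_. 0) \<in> S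
     \<and> (\<forall>f\<in>S. \<forall>g\<in>S. (\<lambda>i. f i + g i) \<in> S)
     \<and> (\<forall>c. \<forall>f\<in>S. (\<lambda>i. c * f i) \<in> S)
     \<and> (\<forall>F f. (\<forall>n. F n \<in> S) \<longrightarrow> f \<in> l2 \<longrightarrow>
            (\<lambda>n. norm_l2 (\<lambda>i. F n i - f i)) \<longlonglongrightarrow> 0 \<longrightarrow> f \<in> S)"

definition proj :: "('i \<Rightarrow> complex) set \<Rightarrow> ('i \<Rightarrow> complex) \<Rightarrow> ('i \<Rightarrow> complex)" where
  "proj S y = (THE p. p \<in> S \<and> (\<forall>z\<in>S. inner_l2 z (\<lambda>i. y i - p i) = 0))"

definition tensor_vec :: "('i \<Rightarrow> complex) \<Rightarrow> ('j \<Rightarrow> complex) \<Rightarrow> ('i \<times> 'j \<Rightarrow> complex)" where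
  "tensor_vec a b = (\<lambda>(x, y). a x * b y)"

definition htensor :: "('i \<Rightarrow> complex) set \<Rightarrow> ('j \<Rightarrow> complex) set \<Rightarrow> ('i \<times> 'j \<Rightarrow> complex) set" where
  "htensor E F = \<Inter> {S. closed_subspace S \<and> {tensor_vec a b | a b. a \<in> E \<and> b \<in> F} \<subseteq> S}"

definition unitary_between :: "('i \<Rightarrow> complex) set \<Rightarrow> ('k \<Rightarrow> complex) set
    \<Rightarrow> (('i \<Rightarrow> complex) \<Rightarrow> ('k \<Rightarrow> complex)) \<Rightarrow> bool" where
  "unitary_between E F W \<longleftrightarrow> W ` E = F
     \<and> (\<forall>a\<in>E. \<forall>b\<in>E. W (\<lambda>i. a i + b i) = (\<lambda>k. W a k + W b k))
     \<and> (\<forall>c. \<forall>a\<in>E. W (\<lambda>i. c * a i) = (\<lambda>i. c * W a i))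
     \<and> (\<forall>a\<in>E. \<forall>b\<in>E. inner_l2 (W a) (W b) = inner_l2 a b)"

text \<open>Operators W \<otimes> id and id \<otimes> W acting on vectors of l2 over product index types.\<close>
definition left_tensor :: "(('i \<Rightarrow> complex) \<Rightarrow> ('k \<Rightarrow> complex)) \<Rightarrow> ('i \<times> 'j \<Rightarrow> complex) \<Rightarrow> ('k \<times> 'j \<Rightarrow> complex)" where
  "left_tensor W f = (\<lambda>(z, y). W (\<lambda>x. f (x, y)) z)"

definition right_tensor :: "(('j \<Rightarrow> complex) \<Rightarrow> ('k \<Rightarrow> complex)) \<Rightarrow> ('i \<times> 'j \<Rightarrow> complex) \<Rightarrow> ('i \<times> 'k \<Rightarrow> complex)" where
  "right_tensor W f = (\<lambda>(y, z). W (\<lambda>x. f (y, x)) z)"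

definition reassoc :: "('a \<times> ('b \<times> 'c) \<Rightarrow> complex) \<Rightarrow> (('a \<times> 'b) \<times> 'c \<Rightarrow> complex)" where
  "reassoc g = (\<lambda>((a, b), c). g (a, (b, c)))"

definition meas_section :: "(real \<Rightarrow> ('i \<Rightarrow> complex)) \<Rightarrow> bool" where
  "meas_section a \<longleftrightarrow> (\<forall>x\<in>l2. (\<lambda>t. inner_l2 x (a t)) \<in> borel_measurable (restrict_space borel {0<..}))"

definition meas_family :: "(real \<Rightarrow> ('i \<Rightarrow> complex) set) \<Rightarrow> bool" where
  "meas_family E \<longleftrightarrow> (\<forall>x\<in>l2. \<forall>y\<in>l2.
      (\<lambda>t. inner_l2 x (proj (E t) y)) \<in> borel_measurable (restrict_space borel {0<..}))"

definition meas_W :: "(real \<Rightarrow> ('i \<Rightarrow> complex) set)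
    \<Rightarrow> (real \<Rightarrow> real \<Rightarrow> ('i \<Rightarrow> complex) \<Rightarrow> ('i \<times> 'i \<Rightarrow> complex)) \<Rightarrow> bool" where
  "meas_W E W \<longleftrightarrow> (\<forall>x\<in>l2. \<forall>z\<in>l2.
      (\<lambda>(s, t). inner_l2 z (W s t (proj (E (s + t)) x)))
        \<in> borel_measurable (restrict_space borel {p :: real \<times> real. 0 < fst p \<and> 0 < snd p}))"

definition product_system :: "(real \<Rightarrow> ('i::countable \<Rightarrow> complex) set)
    \<Rightarrow> (real \<Rightarrow> real \<Rightarrow> ('i \<Rightarrow> complex) \<Rightarrow> ('i \<times> 'i \<Rightarrow> complex)) \<Rightarrow> bool" where
  "product_system E W \<longleftrightarrow>
     (\<forall>t>0. closed_subspace (E t)) \<and> meas_family E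
     \<and> (\<forall>s>0. \<forall>t>0. unitary_between (E (s + t)) (htensor (E s) (E t)) (W s t))
     \<and> meas_W E W
     \<and> (\<forall>r>0. \<forall>s>0. \<forall>t>0. \<forall>x\<in>E (r + s + t).
          left_tensor (W r s) (W (r + s) t x) = reassoc (right_tensor (W s t) (W r (s + t) x)))"

definition is_unit :: "(real \<Rightarrow> ('i \<Rightarrow> complex) set)
    \<Rightarrow> (real \<Rightarrow> real \<Rightarrow> ('i \<Rightarrow> complex) \<Rightarrow> ('i \<times> 'i \<Rightarrow> complex)) \<Rightarrow> (real \<Rightarrow> ('i \<Rightarrow> complex)) \<Rightarrow> bool" where
  "is_unit E W u \<longleftrightarrow> meas_section u \<and> (\<forall>t>0. u t \<in> E t \<and> u t \<noteq> (\<lambda>_. 0))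
     \<and> (\<forall>s>0. \<forall>t>0. W s t (u (s + t)) = tensor_vec (u s) (u t))"

definition normalized_unit :: "(real \<Rightarrow> ('i \<Rightarrow> complex) set)
    \<Rightarrow> (real \<Rightarrow> real \<Rightarrow> ('i \<Rightarrow> complex) \<Rightarrow> ('i \<times> 'i \<Rightarrow> complex)) \<Rightarrow> (real \<Rightarrow> ('i \<Rightarrow> complex)) \<Rightarrow> bool" where
  "normalized_unit E W u \<longleftrightarrow> is_unit E W u \<and> (\<forall>t>0. norm_l2 (u t) = 1)"

definition additive_unit :: "(real \<Rightarrow> ('i \<Rightarrow> complex) set)
    \<Rightarrow> (real \<Rightarrow> real \<Rightarrow> ('i \<Rightarrow> complex) \<Rightarrow> ('i \<times> 'i \<Rightarrow> complex)) \<Rightarrow> (real \<Rightarrow> ('i \<Rightarrow> complex))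
    \<Rightarrow> (real \<Rightarrow> ('i \<Rightarrow> complex)) \<Rightarrow> bool" where
  "additive_unit E W u a \<longleftrightarrow> meas_section a \<and> (\<forall>t>0. a t \<in> E t)
     \<and> (\<forall>s>0. \<forall>t>0. W s t (a (s + t)) = (\<lambda>p. tensor_vec (a s) (u t) p + tensor_vec (u s) (a t) p))"

definition roots :: "(real \<Rightarrow> ('i \<Rightarrow> complex) set)
    \<Rightarrow> (real \<Rightarrow> real \<Rightarrow> ('i \<Rightarrow> complex) \<Rightarrow> ('i \<times> 'i \<Rightarrow> complex)) \<Rightarrow> (real \<Rightarrow> ('i \<Rightarrow> complex))
    \<Rightarrow> (real \<Rightarrow> ('i \<Rightarrow> complex)) set" where
  "roots E W u = {a. additive_unit E W u a \<and> (\<forall>t>0. inner_l2 (a t) (u t) = 0)}"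

definition tensor_spaces :: "(real \<Rightarrow> ('i \<Rightarrow> complex) set) \<Rightarrow> (real \<Rightarrow> ('j \<Rightarrow> complex) set)
    \<Rightarrow> real \<Rightarrow> ('i \<times> 'j \<Rightarrow> complex) set" where
  "tensor_spaces E F t = htensor (E t) (F t)"

definition shuffle :: "(('a \<times> 'c) \<times> ('b \<times> 'd) \<Rightarrow> complex) \<Rightarrow> (('a \<times> 'b) \<times> ('c \<times> 'd) \<Rightarrow> complex)" where
  "shuffle g = (\<lambda>((a, b), (c, d)). g ((a, c), (b, d)))"

definition tensor_W :: "(real \<Rightarrow> real \<Rightarrow> ('i \<Rightarrow> complex) \<Rightarrow> ('i \<times> 'i \<Rightarrow> complex))
    \<Rightarrow> (real \<Rightarrow> real \<Rightarrow> ('j \<Rightarrow> complex) \<Rightarrow> ('j \<times> 'j \<Rightarrow> complex))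
    \<Rightarrow> real \<Rightarrow> real \<Rightarrow> ('i \<times> 'j \<Rightarrow> complex) \<Rightarrow> (('i \<times> 'j) \<times> ('i \<times> 'j) \<Rightarrow> complex)" where
  "tensor_W WE WF s t f = shuffle (left_tensor (WE s t) (right_tensor (WF s t) f))"

definition tensor_section :: "(real \<Rightarrow> ('i \<Rightarrow> complex)) \<Rightarrow> (real \<Rightarrow> ('j \<Rightarrow> complex))
    \<Rightarrow> real \<Rightarrow> ('i \<times> 'j \<Rightarrow> complex)" where
  "tensor_section u v t = tensor_vec (u t) (v t)"

end

theory Submission
  imports Defs
begin

text \<open>If \<open>c\<close> is a root of \<open>u \<otimes> v\<close>, its partial inner products \<open>a t = (id \<otimes> \<langle>v t|) (c t)\<close>
  and \<open>b t = (\<langle>u t| \<otimes> id) (c t)\<close> are roots of \<open>u\<close> and \<open>v\<close>, because the unitaries of \<open>E\<close> and \<open>F\<close>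
  intertwine these contractions with the unitaries of \<open>E \<otimes> F\<close>. The remainder
  \<open>d t = c t - a t \<otimes> v t - u t \<otimes> b t\<close> is again additive, and orthogonal to \<open>E t \<otimes> v t\<close> and to
  \<open>u t \<otimes> F t\<close>. Hence \<open>\<parallel>d t\<parallel>\<^sup>2\<close> is additive in \<open>t\<close>, while a Bessel inequality bounds the
  norm of \<open>x \<mapsto> (id \<otimes> \<langle>x|) (d t)\<close> by \<open>\<parallel>d (t / 2^n)\<parallel>\<^sup>2 = \<parallel>d t\<parallel>\<^sup>2 / 2^n\<close> for every \<open>n\<close>;
  so \<open>d = 0\<close>. Conversely, \<open>a \<otimes> v + u \<otimes> b\<close> is a root for roots \<open>a\<close>, \<open>b\<close> by direct computation.\<close>

section \<open>The sequence space l2\<close>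

definition sq_norm_l2 :: "('a \<Rightarrow> complex) \<Rightarrow> real" where
  "sq_norm_l2 f = infsum (\<lambda>i. (cmod (f i))^2) UNIV"

lemma summable_on_norm_product:
  fixes f :: "'a \<Rightarrow> 'c::{real_normed_field,banach}" and g :: "'b \<Rightarrow> 'c"
  assumes f: "(\<lambda>x. norm (f x)) summable_on UNIV" and g: "(\<lambda>y. norm (g y)) summable_on UNIV"
  shows "(\<lambda>p. norm ((\<lambda>(x,y). f x * g y) p)) summable_on UNIV"
proof -
  have "(\<lambda>p. norm ((\<lambda>(x,y). f x * g y) p)) summable_on Sigma UNIV (\<lambda>_. UNIV)"
  proof (rule summable_on_SigmaI[where g="\<lambda>x. norm (f x) * infsum (\<lambda>y. norm (g y)) UNIV"])
    fix x :: 'a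
    have "((\<lambda>y. norm (g y)) has_sum infsum (\<lambda>y. norm (g y)) UNIV) UNIV"
      using g by (simp add: has_sum_infsum)
    then show "((\<lambda>y. norm ((\<lambda>(x, y). f x * g y) (x, y))) has_sum norm (f x) * infsum (\<lambda>y. norm (g y)) UNIV) UNIV"
      by (simp add: norm_mult has_sum_cmult_right)
  next
    show "(\<lambda>x. norm (f x) * infsum (\<lambda>y. norm (g y)) UNIV) summable_on UNIV"
      using f by (rule summable_on_cmult_left)
  qed auto
  then show ?thesis by simp
qed

lemma infsum_product:
  fixes f :: "'a \<Rightarrow> 'c::{real_normed_field,banach}" and g :: "'b \<Rightarrow> 'c"
  assumes f: "(\<lambda>x. norm (f x)) summable_on UNIV" and g: "(\<lambda>y. norm (g y)) summable_on UNIV"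
  shows "infsum (\<lambda>(x,y). f x * g y) UNIV = infsum f UNIV * infsum g UNIV"
proof -
  have s: "(\<lambda>(x,y). f x * g y) summable_on Sigma UNIV (\<lambda>_. UNIV)"
    using abs_summable_summable[OF summable_on_norm_product[OF f g]] by simp
  have "infsum (\<lambda>(x,y). f x * g y) UNIV = infsum (\<lambda>x. infsum (\<lambda>y. f x * g y) UNIV) UNIV"
    using infsum_Sigma'_banach[OF s] by simp
  also have "\<dots> = infsum (\<lambda>x. f x * infsum g UNIV) UNIV"
    by (simp add: infsum_cmult_right')
  also have "\<dots> = infsum f UNIV * infsum g UNIV"
    by (simp add: infsum_cmult_left')
  finally show ?thesis .
qed

lemma summable_on_norm_inner_l2:
  assumes "f \<in> l2" "g \<in> l2"
  shows "(\<lambda>i. norm (cnj (f i) * g i)) summable_on UNIV"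
proof (rule summable_on_comparison_test[where f="\<lambda>i. (cmod (f i))^2 + (cmod (g i))^2"])
  show "(\<lambda>i. (cmod (f i))^2 + (cmod (g i))^2) summable_on UNIV"
    using assms by (intro summable_on_add) (auto simp: l2_def)
  fix i
  have "2 * (cmod (f i) * cmod (g i)) \<le> (cmod (f i))^2 + (cmod (g i))^2"
    using sum_squares_bound[of "cmod (f i)" "cmod (g i)"] by simp
  moreover have "0 \<le> cmod (f i) * cmod (g i)" by simp
  moreover have "norm (cnj (f i) * g i) = cmod (f i) * cmod (g i)" by (simp add: norm_mult)
  ultimately show "norm (cnj (f i) * g i) \<le> (cmod (f i))^2 + (cmod (g i))^2"
    by linarith
qed auto

lemma summable_on_inner_l2: "f \<in> l2 \<Longrightarrow> g \<in> l2 \<Longrightarrow> (\<lambda>i. cnj (f i) * g i) summable_on UNIV"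
  by (rule abs_summable_summable[OF summable_on_norm_inner_l2])

lemma l2_add: assumes "f \<in> l2" "g \<in> l2" shows "(\<lambda>i. f i + g i) \<in> l2"
proof -
  have "(\<lambda>i. 2 * (cmod (f i))^2 + 2 * (cmod (g i))^2) summable_on UNIV"
    using assms by (intro summable_on_add summable_on_cmult_right) (auto simp: l2_def)
  then show ?thesis unfolding l2_def mem_Collect_eq
  proof (rule summable_on_comparison_test, simp_all)
    fix i
    have "(cmod (f i + g i))^2 \<le> (cmod (f i) + cmod (g i))^2"
      by (simp add: power_mono norm_triangle_ineq)
    also have "\<dots> \<le> 2 * (cmod (f i))^2 + 2 * (cmod (g i))^2"
      using sum_squares_bound[of "cmod (f i)" "cmod (g i)"] by (simp add: power2_sum)
    finally show "(cmod (f i + g i))^2 \<le> 2 * (cmod (f i))^2 + 2 * (cmod (g i))^2" .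
  qed
qed

lemma l2_scale: "f \<in> l2 \<Longrightarrow> (\<lambda>i. c * f i) \<in> l2"
  using summable_on_cmult_right[of "\<lambda>i. (cmod (f i))^2" UNIV "(cmod c)^2"]
  by (simp add: l2_def norm_mult power_mult_distrib)

lemma l2_zero [simp]: "(\<lambda>_. 0) \<in> l2"
  by (simp add: l2_def)

lemma l2_diff: "f \<in> l2 \<Longrightarrow> g \<in> l2 \<Longrightarrow> (\<lambda>i. f i - g i) \<in> l2"
  using l2_add[of f "\<lambda>i. (-1) * g i"] l2_scale[of g "-1"] by simp

lemma l2_tensor_vec: assumes "a \<in> l2" "b \<in> l2" shows "tensor_vec a b \<in> l2"
proof -
  have "(\<lambda>i. norm ((cmod (a i))^2)) summable_on UNIV" "(\<lambda>i. norm ((cmod (b i))^2)) summable_on UNIV"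
    using assms by (simp_all add: l2_def)
  from summable_on_norm_product[OF this] show ?thesis
    by (simp add: l2_def tensor_vec_def case_prod_beta norm_mult power_mult_distrib)
qed

lemma inner_l2_add_right:
  assumes "f \<in> l2" "g \<in> l2" "h \<in> l2"
  shows "inner_l2 f (\<lambda>i. g i + h i) = inner_l2 f g + inner_l2 f h"
  unfolding inner_l2_def
  using infsum_add[OF summable_on_inner_l2[OF assms(1,2)] summable_on_inner_l2[OF assms(1,3)]]
  by (simp add: distrib_left)

lemma inner_l2_add_left:
  assumes "f \<in> l2" "g \<in> l2" "h \<in> l2"
  shows "inner_l2 (\<lambda>i. f i + g i) h = inner_l2 f h + inner_l2 g h"
  unfolding inner_l2_def
  using infsum_add[OF summable_on_inner_l2[OF assms(1,3)] summable_on_inner_l2[OF assms(2,3)]]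
  by (simp add: distrib_right)

lemma inner_l2_scale_right: "inner_l2 f (\<lambda>i. c * g i) = c * inner_l2 f g"
  unfolding inner_l2_def
  by (subst infsum_cmult_right'[symmetric]) (simp add: algebra_simps)

lemma inner_l2_scale_left: "inner_l2 (\<lambda>i. c * f i) g = cnj c * inner_l2 f g"
  unfolding inner_l2_def
  by (subst infsum_cmult_right'[symmetric]) (simp add: algebra_simps)

lemma inner_l2_commute: "inner_l2 g f = cnj (inner_l2 f g)"
  unfolding inner_l2_def
  by (subst infsum_cnj[symmetric]) (simp add: mult.commute)

lemma inner_l2_zero_right [simp]: "inner_l2 f (\<lambda>_. 0) = 0"
  by (simp add: inner_l2_def)

lemma inner_l2_diff_right:
  assumes "f \<in> l2" "g \<in> l2" "h \<in> l2"
  shows "inner_l2 f (\<lambda>i. g i - h i) = inner_l2 f g - inner_l2 f h"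
  using inner_l2_add_right[OF assms(1,2) l2_scale[OF assms(3), of "-1"]]
    inner_l2_scale_right[of f "-1" h]
  by simp

lemma inner_l2_self: "f \<in> l2 \<Longrightarrow> inner_l2 f f = complex_of_real (sq_norm_l2 f)"
proof -
  assume "f \<in> l2"
  then have "((\<lambda>i. complex_of_real ((cmod (f i))^2)) has_sum complex_of_real (sq_norm_l2 f)) UNIV"
    unfolding sq_norm_l2_def by (intro has_sum_of_real has_sum_infsum) (simp add: l2_def)
  also have "(\<lambda>i. complex_of_real ((cmod (f i))^2)) = (\<lambda>i. cnj (f i) * f i)"
    by (metis complex_norm_square mult.commute)
  finally show ?thesis unfolding inner_l2_def by (rule infsumI)
qed

lemma sq_norm_l2_nonneg: "sq_norm_l2 f \<ge> 0"
  unfolding sq_norm_l2_def by (rule infsum_nonneg) simp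

lemma sq_cmod_le_sq_norm_l2:
  assumes "f \<in> l2"
  shows "(cmod (f i))^2 \<le> sq_norm_l2 f"
proof -
  have "infsum (\<lambda>i. (cmod (f i))^2) {i} \<le> infsum (\<lambda>i. (cmod (f i))^2) UNIV"
    using assms by (intro infsum_mono_neutral) (auto simp: l2_def)
  then show ?thesis by (simp add: sq_norm_l2_def)
qed

lemma sq_norm_l2_eq_0:
  assumes "f \<in> l2" "sq_norm_l2 f = 0"
  shows "f = (\<lambda>_. 0)"
  using sq_cmod_le_sq_norm_l2[OF assms(1)] assms(2) by (simp add: fun_eq_iff)

lemma norm_l2_eq_sqrt: "norm_l2 f = sqrt (sq_norm_l2 f)"
  by (simp add: norm_l2_def sq_norm_l2_def)

lemma sq_norm_l2_scale: "sq_norm_l2 (\<lambda>i. c * f i) = (cmod c)^2 * sq_norm_l2 f"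
  unfolding sq_norm_l2_def by (simp add: norm_mult power_mult_distrib infsum_cmult_right')

lemma inner_l2_self_add_scale:
  assumes "f \<in> l2" "g \<in> l2"
  shows "inner_l2 (\<lambda>i. f i + c * g i) (\<lambda>i. f i + c * g i)
       = inner_l2 f f + c * inner_l2 f g + cnj c * inner_l2 g f + cnj c * c * inner_l2 g g"
proof -
  have l: "(\<lambda>i. c * g i) \<in> l2" using assms l2_scale by blast
  have ll: "(\<lambda>i. f i + c * g i) \<in> l2" using assms l l2_add by blast
  show ?thesis
    unfolding inner_l2_add_left[OF assms(1) l ll] inner_l2_add_right[OF assms(1) assms(1) l]
      inner_l2_add_right[OF l assms(1) l] inner_l2_scale_left inner_l2_scale_right
    by simp
qed

lemma sq_norm_l2_add:
  assumes "f \<in> l2" "g \<in> l2"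
  shows "sq_norm_l2 (\<lambda>i. f i + g i) = sq_norm_l2 f + sq_norm_l2 g + 2 * Re (inner_l2 f g)"
proof -
  have "complex_of_real (sq_norm_l2 (\<lambda>i. f i + g i))
      = inner_l2 f f + inner_l2 f g + inner_l2 g f + inner_l2 g g"
    using inner_l2_self[OF l2_add[OF assms]] inner_l2_self_add_scale[OF assms, of 1] by simp
  then have "sq_norm_l2 (\<lambda>i. f i + g i)
      = Re (inner_l2 f f + inner_l2 f g + inner_l2 g f + inner_l2 g g)"
    by (metis Re_complex_of_real)
  then show ?thesis
    using inner_l2_self[OF assms(1)] inner_l2_self[OF assms(2)] by (simp add: inner_l2_commute[of g f])
qed

lemma sq_norm_l2_add_orthogonal:
  assumes "f \<in> l2" "g \<in> l2" "inner_l2 f g = 0"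
  shows "sq_norm_l2 (\<lambda>i. f i + g i) = sq_norm_l2 f + sq_norm_l2 g"
  using sq_norm_l2_add[OF assms(1,2)] assms(3) by simp

lemma inner_l2_cauchy_schwarz:
  assumes "f \<in> l2" "g \<in> l2"
  shows "(cmod (inner_l2 f g))^2 \<le> sq_norm_l2 f * sq_norm_l2 g"
proof (cases "sq_norm_l2 f = 0")
  case True
  then have "f = (\<lambda>_. 0)" using sq_norm_l2_eq_0 assms by blast
  then show ?thesis by (simp add: inner_l2_def sq_norm_l2_nonneg)
next
  case False
  then have N: "sq_norm_l2 f > 0" using sq_norm_l2_nonneg[of f] by linarith
  define p where "p = inner_l2 f g"
  define c where "c = - p / complex_of_real (sq_norm_l2 f)"
  have h: "(\<lambda>i. g i + c * f i) \<in> l2" using assms l2_add l2_scale by blast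
  \<comment> \<open>the square norm of the residual of g after projection onto f\<close>
  have "complex_of_real (sq_norm_l2 (\<lambda>i. g i + c * f i))
      = inner_l2 g g + c * inner_l2 g f + cnj c * inner_l2 f g + cnj c * c * inner_l2 f f"
    using inner_l2_self[OF h] inner_l2_self_add_scale[OF assms(2,1), of c] by simp
  also have "\<dots> = complex_of_real (sq_norm_l2 g - (cmod p)^2 / sq_norm_l2 f)"
    using N inner_l2_self[OF assms(1)] inner_l2_self[OF assms(2)] inner_l2_commute[of g f]
      complex_norm_square[of p]
    by (simp add: c_def p_def field_simps power2_eq_square)
  finally have "0 \<le> sq_norm_l2 g - (cmod p)^2 / sq_norm_l2 f"
    using sq_norm_l2_nonneg of_real_eq_iff by metis
  then show ?thesis using N by (simp add: p_def field_simps)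
qed

lemma inner_l2_tensor_vec:
  assumes "a \<in> l2" "b \<in> l2" "c \<in> l2" "d \<in> l2"
  shows "inner_l2 (tensor_vec a b) (tensor_vec c d) = inner_l2 a c * inner_l2 b d"
proof -
  have "inner_l2 (tensor_vec a b) (tensor_vec c d)
      = infsum (\<lambda>(x,y). (cnj (a x) * c x) * (cnj (b y) * d y)) UNIV"
    unfolding inner_l2_def tensor_vec_def by (intro infsum_cong) (auto simp: algebra_simps)
  also have "\<dots> = inner_l2 a c * inner_l2 b d"
    unfolding inner_l2_def
    by (rule infsum_product[OF summable_on_norm_inner_l2 summable_on_norm_inner_l2]) (use assms in auto)
  finally show ?thesis .
qed

lemma sq_norm_l2_tensor_vec:
  assumes "a \<in> l2" "b \<in> l2"
  shows "sq_norm_l2 (tensor_vec a b) = sq_norm_l2 a * sq_norm_l2 b"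
  using inner_l2_tensor_vec[OF assms assms] inner_l2_self[OF l2_tensor_vec[OF assms]]
    inner_l2_self assms
  by (metis of_real_eq_iff of_real_mult)

definition basis_l2 :: "'a \<Rightarrow> 'a \<Rightarrow> complex" where
  "basis_l2 i = (\<lambda>j. if j = i then 1 else 0)"

lemma l2_basis [simp]: "basis_l2 i \<in> l2"
proof -
  have "(\<lambda>j. (cmod (basis_l2 i j))^2) summable_on UNIV
        \<longleftrightarrow> (\<lambda>j. (cmod (basis_l2 i j))^2) summable_on {i}"
    by (rule summable_on_cong_neutral) (auto simp: basis_l2_def)
  then show ?thesis unfolding l2_def by simp
qed

lemma inner_l2_basis: "inner_l2 (basis_l2 i) f = f i"
  unfolding inner_l2_def basis_l2_def
  by (subst infsum_cong_neutral[where T="{i}"]) auto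

section \<open>Closed subspaces and bounded linear maps\<close>

lemma closed_subspace_subset_l2: "closed_subspace S \<Longrightarrow> S \<subseteq> l2"
  unfolding closed_subspace_def by blast

lemma closed_subspace_mem_l2: "closed_subspace S \<Longrightarrow> f \<in> S \<Longrightarrow> f \<in> l2"
  unfolding closed_subspace_def by blast

lemma closed_subspace_zero: "closed_subspace S \<Longrightarrow> (\<lambda>_. 0) \<in> S"
  unfolding closed_subspace_def by blast

lemma closed_subspace_add: "closed_subspace S \<Longrightarrow> f \<in> S \<Longrightarrow> g \<in> S \<Longrightarrow> (\<lambda>i. f i + g i) \<in> S"
  unfolding closed_subspace_def by blast

lemma closed_subspace_scale: "closed_subspace S \<Longrightarrow> f \<in> S \<Longrightarrow> (\<lambda>i. c * f i) \<in> S"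
  unfolding closed_subspace_def by blast

lemma closed_subspace_diff: "closed_subspace S \<Longrightarrow> f \<in> S \<Longrightarrow> g \<in> S \<Longrightarrow> (\<lambda>i. f i - g i) \<in> S"
  using closed_subspace_add[of S f "\<lambda>i. (-1) * g i"] closed_subspace_scale[of S g "-1"] by simp

lemma norm_l2_tendsto_0_iff:
  "(\<lambda>n. norm_l2 (D n)) \<longlonglongrightarrow> 0 \<longleftrightarrow> (\<lambda>n. sq_norm_l2 (D n)) \<longlonglongrightarrow> 0"
proof
  assume "(\<lambda>n. norm_l2 (D n)) \<longlonglongrightarrow> 0"
  then have "(\<lambda>n. (norm_l2 (D n))^2) \<longlonglongrightarrow> 0^2" by (intro tendsto_power)
  then show "(\<lambda>n. sq_norm_l2 (D n)) \<longlonglongrightarrow> 0" by (simp add: norm_l2_eq_sqrt sq_norm_l2_nonneg)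
next
  assume "(\<lambda>n. sq_norm_l2 (D n)) \<longlonglongrightarrow> 0"
  then have "(\<lambda>n. sqrt (sq_norm_l2 (D n))) \<longlonglongrightarrow> sqrt 0" by (intro tendsto_real_sqrt)
  then show "(\<lambda>n. norm_l2 (D n)) \<longlonglongrightarrow> 0" by (simp add: norm_l2_eq_sqrt)
qed

lemma closed_subspace_limit:
  assumes "closed_subspace S" "\<And>n. F n \<in> S" "f \<in> l2"
    "(\<lambda>n. sq_norm_l2 (\<lambda>i. F n i - f i)) \<longlonglongrightarrow> 0"
  shows "f \<in> S"
  using assms norm_l2_tendsto_0_iff[of "\<lambda>n i. F n i - f i"] unfolding closed_subspace_def by blast

lemma closed_subspace_l2: "closed_subspace l2"
  unfolding closed_subspace_def using l2_add l2_scale by auto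

lemma closed_subspace_singleton_0: "closed_subspace {(\<lambda>_. 0)}"
  unfolding closed_subspace_def
proof (intro conjI allI impI ballI; (simp)?)
  fix f :: "'a \<Rightarrow> complex"
  assume "(\<lambda>n. norm_l2 (\<lambda>i. - f i)) \<longlonglongrightarrow> 0" "f \<in> l2"
  then have "norm_l2 (\<lambda>i. - f i) = 0" by (simp add: LIMSEQ_const_iff)
  then have "sq_norm_l2 f = 0" by (simp add: norm_l2_eq_sqrt sq_norm_l2_def)
  with \<open>f \<in> l2\<close> show "f = (\<lambda>_. 0)" by (rule sq_norm_l2_eq_0)
qed

lemma closed_subspace_Inter:
  assumes "\<And>S. S \<in> \<S> \<Longrightarrow> closed_subspace S" "\<S> \<noteq> {}"
  shows "closed_subspace (\<Inter> \<S>)"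
  unfolding closed_subspace_def
proof (intro conjI allI impI ballI)
  show "\<Inter> \<S> \<subseteq> l2" "(\<lambda>_. 0) \<in> \<Inter> \<S>"
    using assms closed_subspace_subset_l2 closed_subspace_zero by blast+
  show "(\<lambda>i. f i + g i) \<in> \<Inter> \<S>" if "f \<in> \<Inter> \<S>" "g \<in> \<Inter> \<S>" for f g
    using that assms closed_subspace_add by blast
  show "(\<lambda>i. c * f i) \<in> \<Inter> \<S>" if "f \<in> \<Inter> \<S>" for c f
    using that assms closed_subspace_scale by blast
  show "f \<in> \<Inter> \<S>" if "\<forall>n. F n \<in> \<Inter> \<S>" "f \<in> l2"
    "(\<lambda>n. norm_l2 (\<lambda>i. F n i - f i)) \<longlonglongrightarrow> 0" for F f
    using that assms unfolding closed_subspace_def by blast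
qed

lemma tensor_vec_in_htensor: "a \<in> E \<Longrightarrow> b \<in> F \<Longrightarrow> tensor_vec a b \<in> htensor E F"
  unfolding htensor_def by blast

lemma htensor_minimal:
  assumes "closed_subspace S" "\<And>a b. a \<in> E \<Longrightarrow> b \<in> F \<Longrightarrow> tensor_vec a b \<in> S"
  shows "htensor E F \<subseteq> S"
  unfolding htensor_def using assms by blast

lemma closed_subspace_htensor:
  assumes "E \<subseteq> l2" "F \<subseteq> l2"
  shows "closed_subspace (htensor E F)"
  unfolding htensor_def
proof (rule closed_subspace_Inter)
  show "{S. closed_subspace S \<and> {tensor_vec a b |a b. a \<in> E \<and> b \<in> F} \<subseteq> S} \<noteq> {}"
    using closed_subspace_l2 l2_tensor_vec assms by blast
qed auto

definition bounded_linear_l2 :: "('a \<Rightarrow> complex) set \<Rightarrow> (('a \<Rightarrow> complex) \<Rightarrow> ('b \<Rightarrow> complex)) \<Rightarrow> bool" where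
  "bounded_linear_l2 D \<Phi> \<longleftrightarrow> (\<forall>f\<in>D. \<Phi> f \<in> l2)
     \<and> (\<forall>f\<in>D. \<forall>g\<in>D. \<Phi> (\<lambda>i. f i + g i) = (\<lambda>k. \<Phi> f k + \<Phi> g k))
     \<and> (\<forall>c. \<forall>f\<in>D. \<Phi> (\<lambda>i. c * f i) = (\<lambda>k. c * \<Phi> f k))
     \<and> (\<exists>K\<ge>0. \<forall>f\<in>D. sq_norm_l2 (\<Phi> f) \<le> K * sq_norm_l2 f)"

lemma bounded_linear_l2I:
  assumes "\<And>f. f \<in> D \<Longrightarrow> \<Phi> f \<in> l2"
    and "\<And>f g. f \<in> D \<Longrightarrow> g \<in> D \<Longrightarrow> \<Phi> (\<lambda>i. f i + g i) = (\<lambda>k. \<Phi> f k + \<Phi> g k)"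
    and "\<And>c f. f \<in> D \<Longrightarrow> \<Phi> (\<lambda>i. c * f i) = (\<lambda>k. c * \<Phi> f k)"
    and "\<And>f. f \<in> D \<Longrightarrow> sq_norm_l2 (\<Phi> f) \<le> K * sq_norm_l2 f"
  shows "bounded_linear_l2 D \<Phi>"
  unfolding bounded_linear_l2_def
proof (intro conjI)
  have "sq_norm_l2 (\<Phi> f) \<le> max K 0 * sq_norm_l2 f" if "f \<in> D" for f
    using assms(4)[OF that] mult_right_mono[OF max.cobounded1 sq_norm_l2_nonneg] by (rule order_trans)
  then show "\<exists>K\<ge>0. \<forall>f\<in>D. sq_norm_l2 (\<Phi> f) \<le> K * sq_norm_l2 f"
    by (intro exI[of _ "max K 0"]) simp
qed (use assms in auto)

lemma bounded_linear_l2_l2: "bounded_linear_l2 D \<Phi> \<Longrightarrow> f \<in> D \<Longrightarrow> \<Phi> f \<in> l2"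
  unfolding bounded_linear_l2_def by blast

lemma bounded_linear_l2_add:
  "bounded_linear_l2 D \<Phi> \<Longrightarrow> f \<in> D \<Longrightarrow> g \<in> D \<Longrightarrow> \<Phi> (\<lambda>i. f i + g i) = (\<lambda>k. \<Phi> f k + \<Phi> g k)"
  unfolding bounded_linear_l2_def by blast

lemma bounded_linear_l2_scale:
  "bounded_linear_l2 D \<Phi> \<Longrightarrow> f \<in> D \<Longrightarrow> \<Phi> (\<lambda>i. c * f i) = (\<lambda>k. c * \<Phi> f k)"
  unfolding bounded_linear_l2_def by blast

lemma bounded_linear_l2_bound:
  "bounded_linear_l2 D \<Phi> \<Longrightarrow> \<exists>K\<ge>0. \<forall>f\<in>D. sq_norm_l2 (\<Phi> f) \<le> K * sq_norm_l2 f"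
  unfolding bounded_linear_l2_def by blast

lemma bounded_linear_l2_subset: "bounded_linear_l2 D \<Phi> \<Longrightarrow> D' \<subseteq> D \<Longrightarrow> bounded_linear_l2 D' \<Phi>"
  unfolding bounded_linear_l2_def by (meson subsetD)

lemma bounded_linear_l2_compose:
  assumes \<Phi>: "bounded_linear_l2 D \<Phi>" and maps: "\<Phi> ` D \<subseteq> D'" and \<Psi>: "bounded_linear_l2 D' \<Psi>"
  shows "bounded_linear_l2 D (\<lambda>f. \<Psi> (\<Phi> f))"
proof -
  obtain K where K: "\<And>f. f \<in> D \<Longrightarrow> sq_norm_l2 (\<Phi> f) \<le> K * sq_norm_l2 f"
    using bounded_linear_l2_bound[OF \<Phi>] by blast
  obtain L where L: "L \<ge> 0" "\<And>g. g \<in> D' \<Longrightarrow> sq_norm_l2 (\<Psi> g) \<le> L * sq_norm_l2 g"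
    using bounded_linear_l2_bound[OF \<Psi>] by blast
  have "sq_norm_l2 (\<Psi> (\<Phi> f)) \<le> (L * K) * sq_norm_l2 f" if f: "f \<in> D" for f
  proof -
    have "sq_norm_l2 (\<Psi> (\<Phi> f)) \<le> L * sq_norm_l2 (\<Phi> f)" using L(2) maps f by blast
    also have "\<dots> \<le> L * (K * sq_norm_l2 f)" using K[OF f] L(1) by (rule mult_left_mono)
    finally show ?thesis by simp
  qed
  moreover have "\<Psi> (\<Phi> (\<lambda>i. f i + g i)) = (\<lambda>k. \<Psi> (\<Phi> f) k + \<Psi> (\<Phi> g) k)"
    if "f \<in> D" "g \<in> D" for f g
    using that maps bounded_linear_l2_add[OF \<Phi> that] bounded_linear_l2_add[OF \<Psi>, of "\<Phi> f" "\<Phi> g"]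
    by auto
  ultimately show ?thesis
    using maps by (intro bounded_linear_l2I)
      (auto simp: bounded_linear_l2_l2[OF \<Psi>] bounded_linear_l2_scale[OF \<Phi>] bounded_linear_l2_scale[OF \<Psi>])
qed

lemma bounded_linear_l2_sub:
  assumes \<Phi>: "bounded_linear_l2 D \<Phi>" and \<Psi>: "bounded_linear_l2 D \<Psi>"
  shows "bounded_linear_l2 D (\<lambda>f k. \<Phi> f k - \<Psi> f k)"
proof -
  obtain K L where K: "\<And>f. f \<in> D \<Longrightarrow> sq_norm_l2 (\<Phi> f) \<le> K * sq_norm_l2 f"
    and L: "\<And>f. f \<in> D \<Longrightarrow> sq_norm_l2 (\<Psi> f) \<le> L * sq_norm_l2 f"
    using bounded_linear_l2_bound[OF \<Phi>] bounded_linear_l2_bound[OF \<Psi>] by blast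
  have bound: "sq_norm_l2 (\<lambda>k. \<Phi> f k - \<Psi> f k) \<le> (2 * K + 2 * L) * sq_norm_l2 f"
    if f: "f \<in> D" for f
  proof -
    have l: "\<Phi> f \<in> l2" "(\<lambda>k. (-1) * \<Psi> f k) \<in> l2"
      by (rule bounded_linear_l2_l2[OF \<Phi> f], rule l2_scale[OF bounded_linear_l2_l2[OF \<Psi> f]])
    \<comment> \<open>parallelogram law: the cross terms of the sum and the difference cancel\<close>
    have "sq_norm_l2 (\<lambda>k. \<Phi> f k - \<Psi> f k) + sq_norm_l2 (\<lambda>k. \<Phi> f k + \<Psi> f k)
        = 2 * sq_norm_l2 (\<Phi> f) + 2 * sq_norm_l2 (\<Psi> f)"
      using sq_norm_l2_add[OF l] sq_norm_l2_add[OF l(1) bounded_linear_l2_l2[OF \<Psi> f]]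
        sq_norm_l2_scale[of "-1" "\<Psi> f"] inner_l2_scale_right[of "\<Phi> f" "-1" "\<Psi> f"]
      by simp
    then show ?thesis
      using K[OF f] L[OF f] sq_norm_l2_nonneg[of "\<lambda>k. \<Phi> f k + \<Psi> f k"] by (simp add: algebra_simps)
  qed
  show ?thesis
    by (rule bounded_linear_l2I[OF _ _ _ bound])
      (auto simp: l2_diff bounded_linear_l2_l2[OF \<Phi>] bounded_linear_l2_l2[OF \<Psi>]
        bounded_linear_l2_add[OF \<Phi>] bounded_linear_l2_add[OF \<Psi>]
        bounded_linear_l2_scale[OF \<Phi>] bounded_linear_l2_scale[OF \<Psi>] algebra_simps)
qed

lemma bounded_linear_l2_diff:
  assumes D: "closed_subspace D" and \<Phi>: "bounded_linear_l2 D \<Phi>" and f: "f \<in> D" and g: "g \<in> D"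
  shows "\<Phi> (\<lambda>i. f i - g i) = (\<lambda>k. \<Phi> f k - \<Phi> g k)"
  using bounded_linear_l2_add[OF \<Phi> f closed_subspace_scale[OF D g, of "-1"]]
    bounded_linear_l2_scale[OF \<Phi> g, of "-1"]
  by simp

lemma bounded_linear_l2_tendsto:
  assumes D: "closed_subspace D" and \<Phi>: "bounded_linear_l2 D \<Phi>"
    and F: "\<And>n. F n \<in> D" and f: "f \<in> D" and lim: "(\<lambda>n. sq_norm_l2 (\<lambda>i. F n i - f i)) \<longlonglongrightarrow> 0"
  shows "(\<lambda>n. sq_norm_l2 (\<lambda>k. \<Phi> (F n) k - \<Phi> f k)) \<longlonglongrightarrow> 0"
proof -
  obtain K where K: "\<And>f. f \<in> D \<Longrightarrow> sq_norm_l2 (\<Phi> f) \<le> K * sq_norm_l2 f"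
    using bounded_linear_l2_bound[OF \<Phi>] by blast
  have "(\<lambda>n. K * sq_norm_l2 (\<lambda>i. F n i - f i)) \<longlonglongrightarrow> K * 0"
    by (rule tendsto_mult[OF tendsto_const lim])
  then have upper: "(\<lambda>n. K * sq_norm_l2 (\<lambda>i. F n i - f i)) \<longlonglongrightarrow> 0" by simp
  have bound: "sq_norm_l2 (\<lambda>k. \<Phi> (F n) k - \<Phi> f k) \<le> K * sq_norm_l2 (\<lambda>i. F n i - f i)" for n
    using K[OF closed_subspace_diff[OF D F f]] unfolding bounded_linear_l2_diff[OF D \<Phi> F f] .
  show ?thesis
    by (rule real_tendsto_sandwich[OF _ _ tendsto_const upper])
      (simp_all only: sq_norm_l2_nonneg bound eventually_True)
qed

lemma closed_subspace_bounded_linear_preimage: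
  assumes D: "closed_subspace D" and Z: "closed_subspace Z" and \<Phi>: "bounded_linear_l2 D \<Phi>"
  shows "closed_subspace {f \<in> D. \<Phi> f \<in> Z}"
  unfolding closed_subspace_def
proof (intro conjI allI impI ballI)
  show "{f \<in> D. \<Phi> f \<in> Z} \<subseteq> l2" using closed_subspace_subset_l2[OF D] by blast
  show "(\<lambda>_. 0) \<in> {f \<in> D. \<Phi> f \<in> Z}"
    using bounded_linear_l2_scale[OF \<Phi> closed_subspace_zero[OF D], of 0]
      closed_subspace_zero[OF D] closed_subspace_zero[OF Z] by simp
next
  fix f g assume "f \<in> {f \<in> D. \<Phi> f \<in> Z}" "g \<in> {f \<in> D. \<Phi> f \<in> Z}"
  then show "(\<lambda>i. f i + g i) \<in> {f \<in> D. \<Phi> f \<in> Z}"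
    using bounded_linear_l2_add[OF \<Phi>, of f g] closed_subspace_add[OF D, of f g]
      closed_subspace_add[OF Z, of "\<Phi> f" "\<Phi> g"] by simp
next
  fix c f assume "f \<in> {f \<in> D. \<Phi> f \<in> Z}"
  then show "(\<lambda>i. c * f i) \<in> {f \<in> D. \<Phi> f \<in> Z}"
    using bounded_linear_l2_scale[OF \<Phi>, of f c] closed_subspace_scale[OF D, of f c]
      closed_subspace_scale[OF Z, of "\<Phi> f" c] by simp
next
  fix F f assume F: "\<forall>n. F n \<in> {f \<in> D. \<Phi> f \<in> Z}" and f: "f \<in> l2"
    and norm_lim: "(\<lambda>n. norm_l2 (\<lambda>i. F n i - f i)) \<longlonglongrightarrow> 0"
  have lim: "(\<lambda>n. sq_norm_l2 (\<lambda>i. F n i - f i)) \<longlonglongrightarrow> 0"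
    using norm_lim norm_l2_tendsto_0_iff[of "\<lambda>n i. F n i - f i"] by simp
  have FD: "F n \<in> D" and FZ: "\<Phi> (F n) \<in> Z" for n using F by blast+
  have fD: "f \<in> D" by (rule closed_subspace_limit[OF D FD f lim])
  have "\<Phi> f \<in> Z"
    by (rule closed_subspace_limit[OF Z FZ bounded_linear_l2_l2[OF \<Phi> fD]
          bounded_linear_l2_tendsto[OF D \<Phi> FD fD lim]])
  with fD show "f \<in> {f \<in> D. \<Phi> f \<in> Z}" by blast
qed

lemma htensor_bounded_linear_into:
  assumes E: "E \<subseteq> l2" and F: "F \<subseteq> l2" and Z: "closed_subspace Z"
    and \<Phi>: "bounded_linear_l2 (htensor E F) \<Phi>"
    and tensors: "\<And>a b. a \<in> E \<Longrightarrow> b \<in> F \<Longrightarrow> \<Phi> (tensor_vec a b) \<in> Z"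
    and f: "f \<in> htensor E F"
  shows "\<Phi> f \<in> Z"
proof -
  have "htensor E F \<subseteq> {f \<in> htensor E F. \<Phi> f \<in> Z}"
    using closed_subspace_bounded_linear_preimage[OF closed_subspace_htensor[OF E F] Z \<Phi>]
      tensors tensor_vec_in_htensor by (intro htensor_minimal) auto
  with f show ?thesis by blast
qed

lemma htensor_bounded_linear_eq:
  assumes E: "E \<subseteq> l2" and F: "F \<subseteq> l2"
    and \<Phi>: "bounded_linear_l2 (htensor E F) \<Phi>" and \<Psi>: "bounded_linear_l2 (htensor E F) \<Psi>"
    and tensors: "\<And>a b. a \<in> E \<Longrightarrow> b \<in> F \<Longrightarrow> \<Phi> (tensor_vec a b) = \<Psi> (tensor_vec a b)"
    and f: "f \<in> htensor E F"
  shows "\<Phi> f = \<Psi> f"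
proof -
  have "(\<lambda>k. \<Phi> f k - \<Psi> f k) \<in> {(\<lambda>_. 0)}"
    by (rule htensor_bounded_linear_into[OF E F closed_subspace_singleton_0
          bounded_linear_l2_sub[OF \<Phi> \<Psi>] _ f]) (simp add: tensors)
  then show ?thesis by (auto simp: fun_eq_iff)
qed

section \<open>Rows, columns and partial inner products\<close>

lemma l2_row: assumes "g \<in> l2" shows "(\<lambda>j. g (i,j)) \<in> l2"
proof -
  have "(\<lambda>p. (cmod (g p))^2) summable_on UNIV" using assms by (simp add: l2_def)
  then have "(\<lambda>p. (cmod (g p))^2) summable_on range (Pair i)" by (rule summable_on_subset) simp
  then have "((\<lambda>p. (cmod (g p))^2) \<circ> Pair i) summable_on UNIV"
    by (subst summable_on_reindex[symmetric]) (auto simp: inj_on_def)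
  then show ?thesis by (simp add: l2_def comp_def)
qed

definition swap_vec :: "('a \<times> 'b \<Rightarrow> complex) \<Rightarrow> ('b \<times> 'a \<Rightarrow> complex)" where
  "swap_vec g = (\<lambda>(j,i). g (i,j))"

lemma bij_swap: "bij_betw (\<lambda>(x,y). (y,x)) UNIV UNIV"
  by (rule bij_betwI[of _ _ _ "\<lambda>(x,y). (y,x)"]) auto

lemma l2_swap_vec: "g \<in> l2 \<Longrightarrow> swap_vec g \<in> l2"
  unfolding l2_def swap_vec_def
  using summable_on_reindex_bij_betw[OF bij_swap, of "\<lambda>p. (cmod (g p))^2"]
  by (simp add: case_prod_beta)

lemma sq_norm_l2_swap_vec: "sq_norm_l2 (swap_vec g) = sq_norm_l2 g"
  unfolding sq_norm_l2_def swap_vec_def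
  using infsum_reindex_bij_betw[OF bij_swap, of "\<lambda>p. (cmod (g p))^2"]
  by (simp add: case_prod_beta)

lemma l2_column: "g \<in> l2 \<Longrightarrow> (\<lambda>i. g (i,j)) \<in> l2"
  using l2_row[OF l2_swap_vec, of g j] by (simp add: swap_vec_def)

lemma sq_norm_l2_rows:
  assumes "g \<in> l2"
  shows summable_on_sq_norm_l2_rows: "(\<lambda>i. sq_norm_l2 (\<lambda>j. g (i,j))) summable_on UNIV"
    and sq_norm_l2_eq_infsum_rows: "sq_norm_l2 g = infsum (\<lambda>i. sq_norm_l2 (\<lambda>j. g (i,j))) UNIV"
proof -
  have e: "(\<lambda>(i,j). (cmod (g (i,j)))^2) = (\<lambda>p. (cmod (g p))^2)" by auto
  have s: "(\<lambda>(i,j). (cmod (g (i,j)))^2) summable_on (Sigma UNIV (\<lambda>_. UNIV))"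
    unfolding e using assms by (simp add: l2_def)
  show "(\<lambda>i. sq_norm_l2 (\<lambda>j. g (i,j))) summable_on UNIV"
    using summable_on_Sigma_banach[OF s] by (simp add: sq_norm_l2_def)
  show "sq_norm_l2 g = infsum (\<lambda>i. sq_norm_l2 (\<lambda>j. g (i,j))) UNIV"
    using infsum_Sigma'_banach[OF s] unfolding e by (simp add: sq_norm_l2_def)
qed

lemma sq_norm_l2_columns:
  assumes "g \<in> l2"
  shows summable_on_sq_norm_l2_columns: "(\<lambda>j. sq_norm_l2 (\<lambda>i. g (i,j))) summable_on UNIV"
    and sq_norm_l2_eq_infsum_columns: "sq_norm_l2 g = infsum (\<lambda>j. sq_norm_l2 (\<lambda>i. g (i,j))) UNIV"
  using sq_norm_l2_rows[OF l2_swap_vec[OF assms]] sq_norm_l2_swap_vec[of g]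
  by (simp_all add: swap_vec_def)

lemma l2_of_rows:
  assumes rows: "\<And>i. (\<lambda>j. g (i,j)) \<in> l2"
    and summable: "(\<lambda>i. sq_norm_l2 (\<lambda>j. g (i,j))) summable_on UNIV"
  shows "g \<in> l2"
proof -
  have "(\<lambda>p. (cmod (g p))^2) summable_on Sigma UNIV (\<lambda>_. UNIV)"
  proof (rule summable_on_SigmaI[where g="\<lambda>i. sq_norm_l2 (\<lambda>j. g (i,j))"])
    show "((\<lambda>j. (cmod (g (i, j)))^2) has_sum sq_norm_l2 (\<lambda>j. g (i,j))) UNIV" for i
      using rows[of i] unfolding sq_norm_l2_def l2_def by (simp add: has_sum_infsum)
  qed (use summable in auto)
  then show ?thesis by (simp add: l2_def)
qed

lemma l2_of_columns:
  assumes "\<And>j. (\<lambda>i. g (i,j)) \<in> l2" "(\<lambda>j. sq_norm_l2 (\<lambda>i. g (i,j))) summable_on UNIV"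
  shows "g \<in> l2"
proof -
  have "swap_vec g \<in> l2" by (rule l2_of_rows) (use assms in \<open>auto simp: swap_vec_def\<close>)
  then have "swap_vec (swap_vec g) \<in> l2" by (rule l2_swap_vec)
  then show ?thesis by (simp add: swap_vec_def)
qed

text \<open>The partial inner products \<open>(id \<otimes> \<langle>x|) g\<close> and \<open>(\<langle>y| \<otimes> id) g\<close> of a vector
  \<open>g\<close> on a product index type.\<close>

definition contract_right :: "('b \<Rightarrow> complex) \<Rightarrow> ('a \<times> 'b \<Rightarrow> complex) \<Rightarrow> ('a \<Rightarrow> complex)" where
  "contract_right x g = (\<lambda>i. inner_l2 x (\<lambda>j. g (i,j)))"

definition contract_left :: "('a \<Rightarrow> complex) \<Rightarrow> ('a \<times> 'b \<Rightarrow> complex) \<Rightarrow> ('b \<Rightarrow> complex)" where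
  "contract_left y g = (\<lambda>j. inner_l2 y (\<lambda>i. g (i,j)))"

lemma contract_left_eq_contract_right_swap: "contract_left y g = contract_right y (swap_vec g)"
  by (simp add: contract_right_def contract_left_def swap_vec_def)

lemma contract_right_add:
  assumes "x \<in> l2" "g \<in> l2" "h \<in> l2"
  shows "contract_right x (\<lambda>p. g p + h p) = (\<lambda>i. contract_right x g i + contract_right x h i)"
  unfolding contract_right_def using inner_l2_add_right[OF assms(1) l2_row[OF assms(2)] l2_row[OF assms(3)]]
  by simp

lemma contract_right_scale: "contract_right x (\<lambda>p. c * g p) = (\<lambda>i. c * contract_right x g i)"
  unfolding contract_right_def by (simp add: inner_l2_scale_right)

lemma contract_right_diff:
  assumes "x \<in> l2" "g \<in> l2" "h \<in> l2"
  shows "contract_right x (\<lambda>p. g p - h p) = (\<lambda>i. contract_right x g i - contract_right x h i)"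
  using contract_right_add[OF assms(1,2) l2_scale[OF assms(3), of "-1"]]
    contract_right_scale[of x "-1" h]
  by simp

lemma contract_left_add:
  assumes "y \<in> l2" "g \<in> l2" "h \<in> l2"
  shows "contract_left y (\<lambda>p. g p + h p) = (\<lambda>j. contract_left y g j + contract_left y h j)"
  unfolding contract_left_def
  using inner_l2_add_right[OF assms(1) l2_column[OF assms(2)] l2_column[OF assms(3)]]
  by simp

lemma contract_left_scale: "contract_left y (\<lambda>p. c * g p) = (\<lambda>j. c * contract_left y g j)"
  unfolding contract_left_def by (simp add: inner_l2_scale_right)

lemma contract_left_diff:
  assumes "y \<in> l2" "g \<in> l2" "h \<in> l2"
  shows "contract_left y (\<lambda>p. g p - h p) = (\<lambda>j. contract_left y g j - contract_left y h j)"
  using contract_left_add[OF assms(1,2) l2_scale[OF assms(3), of "-1"]]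
    contract_left_scale[of y "-1" h]
  by simp

lemma contract_right_add_scale_vec:
  assumes "x \<in> l2" "y \<in> l2" "g \<in> l2"
  shows "contract_right (\<lambda>j. x j + c * y j) g = (\<lambda>i. contract_right x g i + cnj c * contract_right y g i)"
  unfolding contract_right_def
  using inner_l2_add_left[OF assms(1) l2_scale[OF assms(2)] l2_row[OF assms(3)]]
  by (simp add: inner_l2_scale_left)

lemma contract_right_tensor_vec: "contract_right x (tensor_vec a b) = (\<lambda>i. inner_l2 x b * a i)"
  unfolding contract_right_def tensor_vec_def
  using inner_l2_scale_right[of x "a _" b] by (simp add: mult.commute)

lemma contract_left_tensor_vec: "contract_left y (tensor_vec a b) = (\<lambda>j. inner_l2 y a * b j)"
  unfolding contract_left_def tensor_vec_def
  using inner_l2_scale_right[of y "b _" a] by (simp add: mult.commute)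

lemma contract_right_bound:
  assumes x: "x \<in> l2" and g: "g \<in> l2"
  shows l2_contract_right: "contract_right x g \<in> l2"
    and sq_norm_l2_contract_right_le: "sq_norm_l2 (contract_right x g) \<le> sq_norm_l2 x * sq_norm_l2 g"
proof -
  have le: "(cmod (contract_right x g i))^2 \<le> sq_norm_l2 x * sq_norm_l2 (\<lambda>j. g (i,j))" for i
    unfolding contract_right_def using inner_l2_cauchy_schwarz[OF x l2_row[OF g]] by simp
  have s: "(\<lambda>i. sq_norm_l2 x * sq_norm_l2 (\<lambda>j. g (i,j))) summable_on UNIV"
    using summable_on_sq_norm_l2_rows[OF g] by (rule summable_on_cmult_right)
  have s2: "(\<lambda>i. (cmod (contract_right x g i))^2) summable_on UNIV"
    by (rule summable_on_comparison_test[OF s]) (use le in auto)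
  then show "contract_right x g \<in> l2" by (simp add: l2_def)
  have "sq_norm_l2 (contract_right x g) \<le> infsum (\<lambda>i. sq_norm_l2 x * sq_norm_l2 (\<lambda>j. g (i,j))) UNIV"
    using infsum_mono[OF s2 s le] by (simp add: sq_norm_l2_def)
  also have "\<dots> = sq_norm_l2 x * sq_norm_l2 g"
    using sq_norm_l2_eq_infsum_rows[OF g] by (simp add: infsum_cmult_right')
  finally show "sq_norm_l2 (contract_right x g) \<le> sq_norm_l2 x * sq_norm_l2 g" .
qed

lemma contract_left_bound:
  assumes y: "y \<in> l2" and g: "g \<in> l2"
  shows l2_contract_left: "contract_left y g \<in> l2"
    and sq_norm_l2_contract_left_le: "sq_norm_l2 (contract_left y g) \<le> sq_norm_l2 y * sq_norm_l2 g"
  using contract_right_bound[OF y l2_swap_vec[OF g]] sq_norm_l2_swap_vec[of g]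
  by (simp_all add: contract_left_eq_contract_right_swap)

lemma bounded_linear_l2_contract_right: "x \<in> l2 \<Longrightarrow> bounded_linear_l2 l2 (contract_right x)"
  by (rule bounded_linear_l2I[of _ _ "sq_norm_l2 x"])
    (auto simp: contract_right_bound contract_right_add contract_right_scale)

lemma bounded_linear_l2_contract_left: "y \<in> l2 \<Longrightarrow> bounded_linear_l2 l2 (contract_left y)"
  by (rule bounded_linear_l2I[of _ _ "sq_norm_l2 y"])
    (auto simp: contract_left_bound contract_left_add contract_left_scale)

lemma inner_l2_contract_right:
  assumes y: "y \<in> l2" and x: "x \<in> l2" and g: "g \<in> l2"
  shows "inner_l2 y (contract_right x g) = inner_l2 (tensor_vec y x) g"
proof -
  have s: "(\<lambda>(i,j). cnj (y i) * (cnj (x j) * g (i,j))) summable_on Sigma UNIV (\<lambda>_. UNIV)"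
    using summable_on_inner_l2[OF l2_tensor_vec[OF y x] g]
    by (simp add: tensor_vec_def case_prod_unfold mult.assoc)
  have "inner_l2 y (contract_right x g)
      = infsum (\<lambda>i. infsum (\<lambda>j. cnj (y i) * (cnj (x j) * g (i,j))) UNIV) UNIV"
    unfolding inner_l2_def contract_right_def by (simp add: infsum_cmult_right')
  also have "\<dots> = infsum (\<lambda>(i,j). cnj (y i) * (cnj (x j) * g (i,j))) UNIV"
    using infsum_Sigma'_banach[OF s] by simp
  also have "\<dots> = inner_l2 (tensor_vec y x) g"
    unfolding inner_l2_def tensor_vec_def by (intro infsum_cong) (auto simp: mult.assoc)
  finally show ?thesis .
qed

lemma inner_l2_tensor_vec_swap_vec: "inner_l2 (tensor_vec y x) g = inner_l2 (tensor_vec x y) (swap_vec g)"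
proof -
  let ?f = "\<lambda>q. cnj (x (fst q) * y (snd q)) * g (snd q, fst q)"
  have "infsum (\<lambda>p. ?f ((\<lambda>(a,b). (b,a)) p)) UNIV = infsum ?f UNIV"
    by (rule infsum_reindex_bij_betw[OF bij_swap])
  moreover have "inner_l2 (tensor_vec y x) g = infsum (\<lambda>p. ?f ((\<lambda>(a,b). (b,a)) p)) UNIV"
    unfolding inner_l2_def tensor_vec_def by (intro infsum_cong) (auto simp: mult.commute)
  moreover have "inner_l2 (tensor_vec x y) (swap_vec g) = infsum ?f UNIV"
    unfolding inner_l2_def tensor_vec_def swap_vec_def by (intro infsum_cong) (auto simp: mult.commute)
  ultimately show ?thesis by simp
qed

lemma inner_l2_contract_left:
  assumes y: "y \<in> l2" and x: "x \<in> l2" and g: "g \<in> l2"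
  shows "inner_l2 x (contract_left y g) = inner_l2 (tensor_vec y x) g"
  using inner_l2_contract_right[OF x y l2_swap_vec[OF g]] inner_l2_tensor_vec_swap_vec[of y x g]
  by (simp add: contract_left_eq_contract_right_swap)

lemma contract_right_in_htensor:
  assumes E: "closed_subspace E" and F: "closed_subspace F" and x: "x \<in> l2"
    and f: "f \<in> htensor E F"
  shows "contract_right x f \<in> E"
proof (rule htensor_bounded_linear_into[OF closed_subspace_subset_l2[OF E] closed_subspace_subset_l2[OF F] E _ _ f])
  show "bounded_linear_l2 (htensor E F) (contract_right x)"
    by (rule bounded_linear_l2_subset[OF bounded_linear_l2_contract_right[OF x]
          closed_subspace_subset_l2[OF closed_subspace_htensor]])
      (use closed_subspace_subset_l2 E F in blast)+
  show "contract_right x (tensor_vec a b) \<in> E" if "a \<in> E" for a b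
    unfolding contract_right_tensor_vec using closed_subspace_scale[OF E that] .
qed

lemma contract_left_in_htensor:
  assumes E: "closed_subspace E" and F: "closed_subspace F" and y: "y \<in> l2"
    and f: "f \<in> htensor E F"
  shows "contract_left y f \<in> F"
proof (rule htensor_bounded_linear_into[OF closed_subspace_subset_l2[OF E] closed_subspace_subset_l2[OF F] F _ _ f])
  show "bounded_linear_l2 (htensor E F) (contract_left y)"
    by (rule bounded_linear_l2_subset[OF bounded_linear_l2_contract_left[OF y]
          closed_subspace_subset_l2[OF closed_subspace_htensor]])
      (use closed_subspace_subset_l2 E F in blast)+
  show "contract_left y (tensor_vec a b) \<in> F" if "b \<in> F" for a b
    unfolding contract_left_tensor_vec using closed_subspace_scale[OF F that] .
qed

lemma row_in_htensor:
  assumes "closed_subspace E" "closed_subspace F" "f \<in> htensor E F"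
  shows "(\<lambda>j. f (i,j)) \<in> F"
  using contract_left_in_htensor[OF assms(1,2) l2_basis assms(3), of i]
  by (simp add: contract_left_def inner_l2_basis)

section \<open>Unitaries and their tensor products\<close>

lemma unitary_between_mem: "unitary_between A B W \<Longrightarrow> x \<in> A \<Longrightarrow> W x \<in> B"
  unfolding unitary_between_def by blast

lemma unitary_between_add:
  "unitary_between A B W \<Longrightarrow> x \<in> A \<Longrightarrow> y \<in> A \<Longrightarrow> W (\<lambda>i. x i + y i) = (\<lambda>k. W x k + W y k)"
  unfolding unitary_between_def by blast

lemma unitary_between_scale:
  "unitary_between A B W \<Longrightarrow> x \<in> A \<Longrightarrow> W (\<lambda>i. c * x i) = (\<lambda>k. c * W x k)"
  unfolding unitary_between_def by blast

lemma unitary_between_inner: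
  "unitary_between A B W \<Longrightarrow> x \<in> A \<Longrightarrow> y \<in> A \<Longrightarrow> inner_l2 (W x) (W y) = inner_l2 x y"
  unfolding unitary_between_def by blast

lemma unitary_between_sq_norm:
  assumes W: "unitary_between A B W" and "A \<subseteq> l2" "B \<subseteq> l2" and x: "x \<in> A"
  shows "sq_norm_l2 (W x) = sq_norm_l2 x"
proof -
  have "W x \<in> l2" "x \<in> l2" using assms unitary_between_mem[OF W x] by blast+
  then have "complex_of_real (sq_norm_l2 (W x)) = complex_of_real (sq_norm_l2 x)"
    using unitary_between_inner[OF W x x] by (simp add: inner_l2_self)
  then show ?thesis by simp
qed

lemma bounded_linear_l2_unitary:
  assumes W: "unitary_between A B W" and A: "A \<subseteq> l2" and B: "B \<subseteq> l2"
  shows "bounded_linear_l2 A W"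
  by (rule bounded_linear_l2I[of _ _ 1])
    (use unitary_between_mem[OF W] unitary_between_add[OF W] unitary_between_scale[OF W]
      unitary_between_sq_norm[OF W A B] B in auto)

definition tensor_op :: "(('i \<Rightarrow> complex) \<Rightarrow> ('k \<Rightarrow> complex)) \<Rightarrow> (('j \<Rightarrow> complex) \<Rightarrow> ('l \<Rightarrow> complex))
    \<Rightarrow> ('i \<times> 'j \<Rightarrow> complex) \<Rightarrow> ('k \<times> 'l \<Rightarrow> complex)" where
  "tensor_op WE WF f = left_tensor WE (right_tensor WF f)"

locale unitary_pair =
  fixes E0 :: "('i \<Rightarrow> complex) set" and F0 :: "('j \<Rightarrow> complex) set"
    and E1 :: "('k \<Rightarrow> complex) set" and F1 :: "('l \<Rightarrow> complex) set"
    and WE :: "('i \<Rightarrow> complex) \<Rightarrow> ('k \<Rightarrow> complex)"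
    and WF :: "('j \<Rightarrow> complex) \<Rightarrow> ('l \<Rightarrow> complex)"
  assumes E0: "closed_subspace E0" and F0: "closed_subspace F0"
    and E1: "closed_subspace E1" and F1: "closed_subspace F1"
    and UE: "unitary_between E0 E1 WE" and UF: "unitary_between F0 F1 WF"
begin

abbreviation "T0 \<equiv> htensor E0 F0"

lemma closed_subspace_T0: "closed_subspace T0"
  by (rule closed_subspace_htensor[OF closed_subspace_subset_l2[OF E0] closed_subspace_subset_l2[OF F0]])

lemma row_in_F0: "f \<in> T0 \<Longrightarrow> (\<lambda>j. f (i,j)) \<in> F0"
  by (rule row_in_htensor[OF E0 F0])

lemma WE_l2: "x \<in> E0 \<Longrightarrow> WE x \<in> l2"
  by (rule closed_subspace_mem_l2[OF E1 unitary_between_mem[OF UE]])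

lemma WF_l2: "y \<in> F0 \<Longrightarrow> WF y \<in> l2"
  by (rule closed_subspace_mem_l2[OF F1 unitary_between_mem[OF UF]])

lemma sq_norm_WE: "x \<in> E0 \<Longrightarrow> sq_norm_l2 (WE x) = sq_norm_l2 x"
  by (rule unitary_between_sq_norm[OF UE closed_subspace_subset_l2[OF E0] closed_subspace_subset_l2[OF E1]])

lemma sq_norm_WF: "y \<in> F0 \<Longrightarrow> sq_norm_l2 (WF y) = sq_norm_l2 y"
  by (rule unitary_between_sq_norm[OF UF closed_subspace_subset_l2[OF F0] closed_subspace_subset_l2[OF F1]])

lemma right_tensor_add:
  assumes "f \<in> T0" "g \<in> T0"
  shows "right_tensor WF (\<lambda>p. f p + g p) = (\<lambda>q. right_tensor WF f q + right_tensor WF g q)"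
  using unitary_between_add[OF UF row_in_F0[OF assms(1)] row_in_F0[OF assms(2)]]
  by (auto simp: right_tensor_def fun_eq_iff)

lemma right_tensor_scale:
  assumes "f \<in> T0"
  shows "right_tensor WF (\<lambda>p. c * f p) = (\<lambda>q. c * right_tensor WF f q)"
  using unitary_between_scale[OF UF row_in_F0[OF assms]]
  by (auto simp: right_tensor_def fun_eq_iff)

lemma right_tensor_isometric:
  assumes f: "f \<in> T0"
  shows l2_right_tensor: "right_tensor WF f \<in> l2"
    and sq_norm_right_tensor: "sq_norm_l2 (right_tensor WF f) = sq_norm_l2 f"
proof -
  have fl: "f \<in> l2" using f closed_subspace_mem_l2[OF closed_subspace_T0] by blast
  have row: "(\<lambda>k. right_tensor WF f (i,k)) = WF (\<lambda>j. f (i,j))" for i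
    by (simp add: right_tensor_def)
  have rows: "(\<lambda>k. right_tensor WF f (i,k)) \<in> l2" for i
    unfolding row using WF_l2[OF row_in_F0[OF f]] .
  have eq: "sq_norm_l2 (\<lambda>k. right_tensor WF f (i,k)) = sq_norm_l2 (\<lambda>j. f (i,j))" for i
    unfolding row using sq_norm_WF[OF row_in_F0[OF f]] .
  show l: "right_tensor WF f \<in> l2"
    using l2_of_rows[OF rows] summable_on_sq_norm_l2_rows[OF fl] unfolding eq by blast
  show "sq_norm_l2 (right_tensor WF f) = sq_norm_l2 f"
    unfolding sq_norm_l2_eq_infsum_rows[OF l] sq_norm_l2_eq_infsum_rows[OF fl] eq ..
qed

lemma sq_norm_right_tensor_column_le:
  assumes f: "f \<in> T0"
  shows "sq_norm_l2 (\<lambda>i. right_tensor WF f (i,k)) \<le> sq_norm_l2 f"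
proof -
  have fl: "f \<in> l2" using f closed_subspace_mem_l2[OF closed_subspace_T0] by blast
  have "sq_norm_l2 (\<lambda>i. right_tensor WF f (i,k)) = infsum (\<lambda>i. (cmod (WF (\<lambda>j. f (i,j)) k))^2) UNIV"
    by (simp add: sq_norm_l2_def right_tensor_def)
  also have "\<dots> \<le> infsum (\<lambda>i. sq_norm_l2 (\<lambda>j. f (i,j))) UNIV"
  proof (rule infsum_mono)
    show "(\<lambda>i. sq_norm_l2 (\<lambda>j. f (i,j))) summable_on UNIV"
      by (rule summable_on_sq_norm_l2_rows[OF fl])
    show "(\<lambda>i. (cmod (WF (\<lambda>j. f (i,j)) k))^2) summable_on UNIV"
      using l2_column[OF l2_right_tensor[OF f], of k] by (simp add: l2_def right_tensor_def)
    show "(cmod (WF (\<lambda>j. f (i,j)) k))^2 \<le> sq_norm_l2 (\<lambda>j. f (i,j))" for i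
      using sq_cmod_le_sq_norm_l2[OF WF_l2[OF row_in_F0[OF f]]] sq_norm_WF[OF row_in_F0[OF f]] by simp
  qed
  also have "\<dots> = sq_norm_l2 f" using sq_norm_l2_eq_infsum_rows[OF fl] by simp
  finally show ?thesis .
qed

lemma right_tensor_column_in_E0:
  assumes f: "f \<in> T0"
  shows "(\<lambda>i. right_tensor WF f (i,k)) \<in> E0"
proof (rule htensor_bounded_linear_into[OF closed_subspace_subset_l2[OF E0] closed_subspace_subset_l2[OF F0] E0 _ _ f])
  show "bounded_linear_l2 T0 (\<lambda>f i. right_tensor WF f (i,k))"
    by (rule bounded_linear_l2I[of _ _ 1])
      (auto simp: l2_column l2_right_tensor sq_norm_right_tensor_column_le right_tensor_add right_tensor_scale)
  show "(\<lambda>i. right_tensor WF (tensor_vec a b) (i,k)) \<in> E0" if a: "a \<in> E0" and b: "b \<in> F0" for a b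
  proof -
    have "(\<lambda>i. right_tensor WF (tensor_vec a b) (i,k)) = (\<lambda>i. WF b k * a i)"
      using unitary_between_scale[OF UF b] by (auto simp: right_tensor_def tensor_vec_def mult.commute)
    then show ?thesis using closed_subspace_scale[OF E0 a] by simp
  qed
qed

lemma tensor_op_isometric:
  assumes f: "f \<in> T0"
  shows l2_tensor_op: "tensor_op WE WF f \<in> l2" and sq_norm_tensor_op: "sq_norm_l2 (tensor_op WE WF f) = sq_norm_l2 f"
proof -
  have rl: "right_tensor WF f \<in> l2" by (rule l2_right_tensor[OF f])
  have col: "(\<lambda>z. tensor_op WE WF f (z,k)) = WE (\<lambda>i. right_tensor WF f (i,k))" for k
    by (simp add: tensor_op_def left_tensor_def)
  have cols: "(\<lambda>z. tensor_op WE WF f (z,k)) \<in> l2" for k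
    unfolding col using WE_l2[OF right_tensor_column_in_E0[OF f]] .
  have eq: "sq_norm_l2 (\<lambda>z. tensor_op WE WF f (z,k)) = sq_norm_l2 (\<lambda>i. right_tensor WF f (i,k))" for k
    unfolding col using sq_norm_WE[OF right_tensor_column_in_E0[OF f]] .
  show l: "tensor_op WE WF f \<in> l2"
    using l2_of_columns[OF cols] summable_on_sq_norm_l2_columns[OF rl] unfolding eq by blast
  show "sq_norm_l2 (tensor_op WE WF f) = sq_norm_l2 f"
    unfolding sq_norm_l2_eq_infsum_columns[OF l] eq sq_norm_l2_eq_infsum_columns[OF rl, symmetric]
      sq_norm_right_tensor[OF f] ..
qed

lemma tensor_op_add:
  assumes f: "f \<in> T0" and g: "g \<in> T0"
  shows "tensor_op WE WF (\<lambda>p. f p + g p) = (\<lambda>q. tensor_op WE WF f q + tensor_op WE WF g q)"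
  using unitary_between_add[OF UE right_tensor_column_in_E0[OF f] right_tensor_column_in_E0[OF g]]
  by (auto simp: tensor_op_def left_tensor_def right_tensor_add[OF f g] fun_eq_iff)

lemma tensor_op_scale:
  assumes f: "f \<in> T0"
  shows "tensor_op WE WF (\<lambda>p. c * f p) = (\<lambda>q. c * tensor_op WE WF f q)"
  using unitary_between_scale[OF UE right_tensor_column_in_E0[OF f]]
  by (auto simp: tensor_op_def left_tensor_def right_tensor_scale[OF f] fun_eq_iff)

lemma tensor_op_tensor_vec:
  assumes a: "a \<in> E0" and b: "b \<in> F0"
  shows "tensor_op WE WF (tensor_vec a b) = tensor_vec (WE a) (WF b)"
proof (rule ext, clarify)
  fix z k
  have "(\<lambda>i. right_tensor WF (tensor_vec a b) (i,k)) = (\<lambda>i. WF b k * a i)"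
    using unitary_between_scale[OF UF b] by (auto simp: right_tensor_def tensor_vec_def mult.commute)
  moreover have "WE (\<lambda>i. WF b k * a i) = (\<lambda>z. WF b k * WE a z)" by (rule unitary_between_scale[OF UE a])
  ultimately show "tensor_op WE WF (tensor_vec a b) (z,k) = tensor_vec (WE a) (WF b) (z,k)"
    by (simp add: tensor_op_def left_tensor_def tensor_vec_def mult.commute)
qed

lemma bounded_linear_l2_tensor_op: "bounded_linear_l2 T0 (tensor_op WE WF)"
  by (rule bounded_linear_l2I[of _ _ 1]) (auto simp: tensor_op_isometric tensor_op_add tensor_op_scale)

text \<open>By continuity and linearity, the next two identities need only be checked on elementary
  tensors.\<close>

lemma WE_contract_right:
  assumes x: "x \<in> F0" and f: "f \<in> T0"
  shows "WE (contract_right x f) = contract_right (WF x) (tensor_op WE WF f)"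
proof (rule htensor_bounded_linear_eq[OF closed_subspace_subset_l2[OF E0] closed_subspace_subset_l2[OF F0] _ _ _ f])
  have xl: "x \<in> l2" by (rule closed_subspace_mem_l2[OF F0 x])
  show "bounded_linear_l2 T0 (\<lambda>f. WE (contract_right x f))"
    by (rule bounded_linear_l2_compose[OF
          bounded_linear_l2_subset[OF bounded_linear_l2_contract_right[OF xl]
            closed_subspace_subset_l2[OF closed_subspace_T0]] _
          bounded_linear_l2_unitary[OF UE closed_subspace_subset_l2[OF E0] closed_subspace_subset_l2[OF E1]]])
      (use contract_right_in_htensor[OF E0 F0 xl] in blast)
  show "bounded_linear_l2 T0 (\<lambda>f. contract_right (WF x) (tensor_op WE WF f))"
    by (rule bounded_linear_l2_compose[OF bounded_linear_l2_tensor_op _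
          bounded_linear_l2_contract_right[OF WF_l2[OF x]]])
      (use l2_tensor_op in blast)
  show "WE (contract_right x (tensor_vec a b)) = contract_right (WF x) (tensor_op WE WF (tensor_vec a b))"
    if a: "a \<in> E0" and b: "b \<in> F0" for a b
    unfolding tensor_op_tensor_vec[OF a b] contract_right_tensor_vec unitary_between_inner[OF UF x b]
    by (rule unitary_between_scale[OF UE a])
qed

lemma WF_contract_left:
  assumes y: "y \<in> E0" and f: "f \<in> T0"
  shows "WF (contract_left y f) = contract_left (WE y) (tensor_op WE WF f)"
proof (rule htensor_bounded_linear_eq[OF closed_subspace_subset_l2[OF E0] closed_subspace_subset_l2[OF F0] _ _ _ f])
  have yl: "y \<in> l2" by (rule closed_subspace_mem_l2[OF E0 y])
  show "bounded_linear_l2 T0 (\<lambda>f. WF (contract_left y f))"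
    by (rule bounded_linear_l2_compose[OF
          bounded_linear_l2_subset[OF bounded_linear_l2_contract_left[OF yl]
            closed_subspace_subset_l2[OF closed_subspace_T0]] _
          bounded_linear_l2_unitary[OF UF closed_subspace_subset_l2[OF F0] closed_subspace_subset_l2[OF F1]]])
      (use contract_left_in_htensor[OF E0 F0 yl] in blast)
  show "bounded_linear_l2 T0 (\<lambda>f. contract_left (WE y) (tensor_op WE WF f))"
    by (rule bounded_linear_l2_compose[OF bounded_linear_l2_tensor_op _
          bounded_linear_l2_contract_left[OF WE_l2[OF y]]])
      (use l2_tensor_op in blast)
  show "WF (contract_left y (tensor_vec a b)) = contract_left (WE y) (tensor_op WE WF (tensor_vec a b))"
    if a: "a \<in> E0" and b: "b \<in> F0" for a b
    unfolding tensor_op_tensor_vec[OF a b] contract_left_tensor_vec unitary_between_inner[OF UE y a]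
    by (rule unitary_between_scale[OF UF b])
qed

end

section \<open>A Bessel inequality for partial inner products\<close>

lemma sq_norm_l2_le_of_inner_eq:
  assumes P: "P \<in> l2" and X: "X \<in> l2" and eq: "inner_l2 P X = complex_of_real (sq_norm_l2 P)"
  shows "sq_norm_l2 P \<le> sq_norm_l2 X"
proof -
  have "0 \<le> sq_norm_l2 (\<lambda>z. X z + (-1) * P z)" by (rule sq_norm_l2_nonneg)
  also have "\<dots> = sq_norm_l2 X + sq_norm_l2 (\<lambda>z. (-1) * P z) + 2 * Re (inner_l2 X (\<lambda>z. (-1) * P z))"
    by (rule sq_norm_l2_add[OF X l2_scale[OF P]])
  also have "\<dots> = sq_norm_l2 X - sq_norm_l2 P"
    unfolding sq_norm_l2_scale inner_l2_scale_right inner_l2_commute[of X P] eq by simp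
  finally show ?thesis by simp
qed

lemma sq_norm_l2_orthogonal_pieces_le:
  assumes l2: "T1 \<in> l2" "T2 \<in> l2" "T3 \<in> l2" "X \<in> l2"
    and perp: "inner_l2 T1 T2 = 0" "inner_l2 T1 T3 = 0" "inner_l2 T2 T3 = 0"
    and pieces: "inner_l2 T1 X = complex_of_real (sq_norm_l2 T1)"
      "inner_l2 T2 X = complex_of_real (sq_norm_l2 T2)" "inner_l2 T3 X = complex_of_real (sq_norm_l2 T3)"
  shows "sq_norm_l2 T1 + sq_norm_l2 T2 + sq_norm_l2 T3 \<le> sq_norm_l2 X"
proof -
  define P where "P = (\<lambda>z. T1 z + (T2 z + T3 z))"
  have T23: "(\<lambda>z. T2 z + T3 z) \<in> l2" by (rule l2_add[OF l2(2,3)])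
  have nP: "sq_norm_l2 P = sq_norm_l2 T1 + sq_norm_l2 T2 + sq_norm_l2 T3"
    unfolding P_def using sq_norm_l2_add_orthogonal[OF l2(1) T23] inner_l2_add_right[OF l2(1-3)]
      sq_norm_l2_add_orthogonal[OF l2(2,3) perp(3)] perp(1,2)
    by simp
  have "inner_l2 P X = complex_of_real (sq_norm_l2 T1 + sq_norm_l2 T2 + sq_norm_l2 T3)"
    unfolding P_def inner_l2_add_left[OF l2(1) T23 l2(4)] inner_l2_add_left[OF l2(2-4)] pieces
    by simp
  then have "inner_l2 P X = complex_of_real (sq_norm_l2 P)" unfolding nP .
  from sq_norm_l2_le_of_inner_eq[OF _ l2(4) this] show ?thesis
    unfolding nP using l2_add[OF l2(1) T23] by (simp add: P_def)
qed

text \<open>For unit vectors \<open>p\<close>, \<open>q\<close>, the vectors \<open>Y1 \<otimes> q\<close>, \<open>\<alpha> p \<otimes> q\<close>, \<open>p \<otimes> Y2\<close> below are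
  orthogonal pieces of the projection of \<open>X\<close> onto \<open>E \<otimes> q + p \<otimes> F\<close>.\<close>

lemma sq_norm_l2_contract_residuals_le:
  fixes p :: "'a \<Rightarrow> complex" and q :: "'b \<Rightarrow> complex" and X :: "'a \<times> 'b \<Rightarrow> complex"
  assumes p: "p \<in> l2" and q: "q \<in> l2" and np: "sq_norm_l2 p = 1" and nq: "sq_norm_l2 q = 1"
    and X: "X \<in> l2"
  shows "sq_norm_l2 (\<lambda>k. contract_right q X k - inner_l2 p (contract_right q X) * p k)
       + sq_norm_l2 (\<lambda>k. contract_left p X k - inner_l2 q (contract_left p X) * q k) \<le> sq_norm_l2 X"
proof -
  define X1 where "X1 = contract_right q X"
  define X2 where "X2 = contract_left p X"
  define \<alpha> where "\<alpha> = inner_l2 p X1"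
  define Y1 where "Y1 = (\<lambda>k. X1 k - \<alpha> * p k)"
  define Y2 where "Y2 = (\<lambda>k. X2 k - \<alpha> * q k)"
  have X1l: "X1 \<in> l2" and X2l: "X2 \<in> l2"
    unfolding X1_def X2_def by (rule l2_contract_right[OF q X], rule l2_contract_left[OF p X])
  have \<alpha>2: "inner_l2 q X2 = \<alpha>"
    unfolding X2_def \<alpha>_def X1_def
    using inner_l2_contract_left[OF p q X] inner_l2_contract_right[OF p q X] by simp
  have pp: "inner_l2 p p = 1" and qq: "inner_l2 q q = 1"
    using inner_l2_self[OF p] inner_l2_self[OF q] np nq by simp_all
  have Y1l: "Y1 \<in> l2" and Y2l: "Y2 \<in> l2"
    unfolding Y1_def Y2_def using X1l X2l p q by (simp_all add: l2_diff l2_scale)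
  have Y1p: "inner_l2 Y1 p = 0"
    using inner_l2_diff_right[OF p X1l l2_scale[OF p]] inner_l2_commute[of Y1 p]
    by (simp add: Y1_def inner_l2_scale_right pp \<alpha>_def)
  have qY2: "inner_l2 q Y2 = 0"
    using inner_l2_diff_right[OF q X2l l2_scale[OF q]] by (simp add: Y2_def inner_l2_scale_right qq \<alpha>2)
  have i1: "inner_l2 (tensor_vec Y1 q) X = complex_of_real (sq_norm_l2 (tensor_vec Y1 q))"
  proof -
    have "inner_l2 (tensor_vec Y1 q) X = inner_l2 Y1 (\<lambda>k. Y1 k + \<alpha> * p k)"
      unfolding inner_l2_contract_right[OF Y1l q X, symmetric] by (simp add: X1_def[symmetric] Y1_def)
    then show ?thesis
      unfolding inner_l2_add_right[OF Y1l Y1l l2_scale[OF p]] inner_l2_scale_right Y1p inner_l2_self[OF Y1l]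
      by (simp add: sq_norm_l2_tensor_vec Y1l q nq)
  qed
  have i2: "inner_l2 (\<lambda>z. \<alpha> * tensor_vec p q z) X = complex_of_real (sq_norm_l2 (\<lambda>z. \<alpha> * tensor_vec p q z))"
  proof -
    have "inner_l2 (\<lambda>z. \<alpha> * tensor_vec p q z) X = cnj \<alpha> * \<alpha>"
      unfolding inner_l2_scale_left by (simp add: \<alpha>_def X1_def inner_l2_contract_right[OF p q X])
    then show ?thesis
      using complex_norm_square[of \<alpha>] by (simp add: mult.commute sq_norm_l2_scale sq_norm_l2_tensor_vec p q np nq)
  qed
  have i3: "inner_l2 (tensor_vec p Y2) X = complex_of_real (sq_norm_l2 (tensor_vec p Y2))"
  proof -
    have Y2q: "inner_l2 Y2 q = 0" using qY2 inner_l2_commute[of Y2 q] by simp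
    have "inner_l2 (tensor_vec p Y2) X = inner_l2 Y2 (\<lambda>k. Y2 k + \<alpha> * q k)"
      unfolding inner_l2_contract_left[OF p Y2l X, symmetric] by (simp add: X2_def[symmetric] Y2_def)
    then show ?thesis
      unfolding inner_l2_add_right[OF Y2l Y2l l2_scale[OF q]] inner_l2_scale_right Y2q inner_l2_self[OF Y2l]
      by (simp add: sq_norm_l2_tensor_vec Y2l p np)
  qed
  have "sq_norm_l2 Y1 + (cmod \<alpha>)^2 + sq_norm_l2 Y2 \<le> sq_norm_l2 X"
    using sq_norm_l2_orthogonal_pieces_le[OF l2_tensor_vec[OF Y1l q] l2_scale[OF l2_tensor_vec[OF p q]]
        l2_tensor_vec[OF p Y2l] X _ _ _ i1 i2 i3]
    by (simp add: inner_l2_scale_left inner_l2_scale_right inner_l2_tensor_vec sq_norm_l2_tensor_vec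
        sq_norm_l2_scale Y1l Y2l p q np nq Y1p qY2)
  then have "sq_norm_l2 Y1 + sq_norm_l2 Y2 \<le> sq_norm_l2 X"
    using zero_le_power2[of "cmod \<alpha>"] by linarith
  then show ?thesis
    using \<alpha>2 by (simp add: Y1_def Y2_def X1_def X2_def \<alpha>_def)
qed

section \<open>Measurable sections\<close>

lemma borel_measurable_cnj:
  "f \<in> borel_measurable M \<Longrightarrow> (\<lambda>t. cnj (f t :: complex)) \<in> borel_measurable M"
  by (rule borel_measurable_continuous_on[of cnj]) (auto intro: continuous_on_cnj continuous_on_id)

lemma borel_measurable_infsum:
  fixes F :: "'t \<Rightarrow> 'k::countable \<Rightarrow> complex"
  assumes m: "\<And>k. (\<lambda>t. F t k) \<in> borel_measurable M"
    and s: "\<And>t. t \<in> space M \<Longrightarrow> F t summable_on UNIV"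
  shows "(\<lambda>t. infsum (F t) UNIV) \<in> borel_measurable M"
proof (rule borel_measurable_LIMSEQ_metric[where f="\<lambda>n t. sum (F t) {k. to_nat k < n}"])
  have fin: "finite {k::'k. to_nat k < n}" for n
    using finite_vimageI[of "{..<n}" "to_nat :: 'k \<Rightarrow> nat"] by (simp add: vimage_def)
  show "(\<lambda>t. sum (F t) {k. to_nat k < n}) \<in> borel_measurable M" for n
    using fin[of n] by (induction rule: finite_induct) (auto intro!: borel_measurable_add m)
  \<comment> \<open>the initial segments of an enumeration of \<open>'k\<close> exhaust every finite set\<close>
  have segments: "filterlim (\<lambda>n. {k::'k. to_nat k < n}) (finite_subsets_at_top UNIV) sequentially"
    unfolding filterlim_finite_subsets_at_top
  proof (intro allI impI)
    fix X :: "'k set" assume "finite X \<and> X \<subseteq> UNIV"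
    then obtain N where N: "\<And>x. x \<in> X \<Longrightarrow> to_nat x < N"
      using finite_nat_bounded[of "to_nat ` X"] by (auto simp: lessThan_def)
    show "\<forall>\<^sub>F n in sequentially. finite {k::'k. to_nat k < n} \<and> X \<subseteq> {k. to_nat k < n} \<and> {k. to_nat k < n} \<subseteq> UNIV"
      using eventually_ge_at_top[of N]
    proof eventually_elim
      case (elim n)
      then have "X \<subseteq> {k. to_nat k < n}" using N by fastforce
      then show ?case using fin[of n] by simp
    qed
  qed
  fix t assume "t \<in> space M"
  then have "(sum (F t) \<longlongrightarrow> infsum (F t) UNIV) (finite_subsets_at_top UNIV)"
    using has_sum_infsum[OF s] unfolding has_sum_def by blast
  from filterlim_compose[OF this segments]
  show "(\<lambda>n. sum (F t) {k. to_nat k < n}) \<longlonglongrightarrow> infsum (F t) UNIV" .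
qed

lemma measurable_coordinate_meas_section:
  assumes "meas_section a"
  shows "(\<lambda>t. a t i) \<in> borel_measurable (restrict_space borel {0<..})"
proof -
  have "(\<lambda>t. inner_l2 (basis_l2 i) (a t)) \<in> borel_measurable (restrict_space borel {0<..})"
    using assms l2_basis[of i] unfolding meas_section_def by blast
  then show ?thesis by (simp add: inner_l2_basis)
qed

lemma meas_section_of_measurable_coordinates:
  fixes a :: "real \<Rightarrow> ('i::countable \<Rightarrow> complex)"
  assumes l2: "\<And>t. t > 0 \<Longrightarrow> a t \<in> l2"
    and m: "\<And>i. (\<lambda>t. a t i) \<in> borel_measurable (restrict_space borel {0<..})"
  shows "meas_section a"
  unfolding meas_section_def inner_l2_def
proof
  fix x :: "'i \<Rightarrow> complex" assume "x \<in> l2"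
  then show "(\<lambda>t. infsum (\<lambda>i. cnj (x i) * a t i) UNIV) \<in> borel_measurable (restrict_space borel {0<..})"
    using l2 m by (intro borel_measurable_infsum borel_measurable_times borel_measurable_const)
      (auto simp: space_restrict_space summable_on_inner_l2)
qed

lemma meas_section_cong:
  "(\<And>t. t > 0 \<Longrightarrow> a t = b t) \<Longrightarrow> meas_section a \<longleftrightarrow> meas_section b"
  unfolding meas_section_def by (intro ball_cong measurable_cong) (auto simp: space_restrict_space)

lemma meas_section_add:
  fixes a b :: "real \<Rightarrow> ('i::countable \<Rightarrow> complex)"
  assumes "meas_section a" "meas_section b" "\<And>t. t > 0 \<Longrightarrow> a t \<in> l2" "\<And>t. t > 0 \<Longrightarrow> b t \<in> l2"
  shows "meas_section (\<lambda>t i. a t i + b t i)"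
proof (rule meas_section_of_measurable_coordinates)
  show "(\<lambda>t. a t i + b t i) \<in> borel_measurable (restrict_space borel {0<..})" for i
    using assms(1,2) by (intro borel_measurable_add measurable_coordinate_meas_section)
qed (use assms(3,4) l2_add in blast)

lemma meas_section_tensor_vec:
  fixes a :: "real \<Rightarrow> ('i::countable \<Rightarrow> complex)" and b :: "real \<Rightarrow> ('j::countable \<Rightarrow> complex)"
  assumes "meas_section a" "meas_section b" "\<And>t. t > 0 \<Longrightarrow> a t \<in> l2" "\<And>t. t > 0 \<Longrightarrow> b t \<in> l2"
  shows "meas_section (\<lambda>t. tensor_vec (a t) (b t))"
proof (rule meas_section_of_measurable_coordinates)
  show "(\<lambda>t. tensor_vec (a t) (b t) p) \<in> borel_measurable (restrict_space borel {0<..})" for p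
    using assms(1,2) unfolding tensor_vec_def case_prod_beta
    by (intro borel_measurable_times measurable_coordinate_meas_section)
qed (use assms(3,4) l2_tensor_vec in blast)

lemma meas_section_contract_right:
  fixes c :: "real \<Rightarrow> ('i::countable \<times> 'j::countable \<Rightarrow> complex)" and v :: "real \<Rightarrow> ('j \<Rightarrow> complex)"
  assumes c: "meas_section c" and v: "meas_section v"
    and l2: "\<And>t. t > 0 \<Longrightarrow> c t \<in> l2" "\<And>t. t > 0 \<Longrightarrow> v t \<in> l2"
  shows "meas_section (\<lambda>t. contract_right (v t) (c t))"
proof (rule meas_section_of_measurable_coordinates)
  show "contract_right (v t) (c t) \<in> l2" if "t > 0" for t
    using l2 that by (simp add: l2_contract_right)
  show "(\<lambda>t. contract_right (v t) (c t) i) \<in> borel_measurable (restrict_space borel {0<..})" for i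
    unfolding contract_right_def inner_l2_def
  proof (rule borel_measurable_infsum)
    show "(\<lambda>t. cnj (v t j) * c t (i, j)) \<in> borel_measurable (restrict_space borel {0<..})" for j
      using c v by (intro borel_measurable_times borel_measurable_cnj measurable_coordinate_meas_section)
    show "(\<lambda>j. cnj (v t j) * c t (i, j)) summable_on UNIV" if "t \<in> space (restrict_space borel {0<..})" for t
      using that l2 by (simp add: space_restrict_space summable_on_inner_l2 l2_row)
  qed
qed

lemma meas_section_contract_left:
  fixes c :: "real \<Rightarrow> ('i::countable \<times> 'j::countable \<Rightarrow> complex)" and u :: "real \<Rightarrow> ('i \<Rightarrow> complex)"
  assumes c: "meas_section c" and u: "meas_section u"
    and l2: "\<And>t. t > 0 \<Longrightarrow> c t \<in> l2" "\<And>t. t > 0 \<Longrightarrow> u t \<in> l2"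
  shows "meas_section (\<lambda>t. contract_left (u t) (c t))"
proof (rule meas_section_of_measurable_coordinates)
  show "contract_left (u t) (c t) \<in> l2" if "t > 0" for t
    using l2 that by (simp add: l2_contract_left)
  show "(\<lambda>t. contract_left (u t) (c t) j) \<in> borel_measurable (restrict_space borel {0<..})" for j
    unfolding contract_left_def inner_l2_def
  proof (rule borel_measurable_infsum)
    show "(\<lambda>t. cnj (u t i) * c t (i, j)) \<in> borel_measurable (restrict_space borel {0<..})" for i
      using c u by (intro borel_measurable_times borel_measurable_cnj measurable_coordinate_meas_section)
    show "(\<lambda>i. cnj (u t i) * c t (i, j)) summable_on UNIV" if "t \<in> space (restrict_space borel {0<..})" for t
      using that l2 by (simp add: space_restrict_space summable_on_inner_l2 l2_column)
  qed
qed

section \<open>Reordering of two-fold tensor products\<close>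

lemma bij_shuffle: "bij_betw (\<lambda>((a,b),(c,d)). ((a,c),(b,d))) UNIV UNIV"
  by (rule bij_betwI[of _ _ _ "\<lambda>((a,c),(b,d)). ((a,b),(c,d))"]) auto

lemma sq_norm_l2_shuffle: "sq_norm_l2 (shuffle g) = sq_norm_l2 g"
proof -
  have "infsum (\<lambda>p. (\<lambda>q. (cmod (g q))^2) ((\<lambda>((a,b),(c,d)). ((a,c),(b,d))) p)) UNIV
        = infsum (\<lambda>q. (cmod (g q))^2) UNIV"
    by (rule infsum_reindex_bij_betw[OF bij_shuffle])
  moreover have "(\<lambda>p. (\<lambda>q. (cmod (g q))^2) ((\<lambda>((a,b),(c,d)). ((a,c),(b,d))) p))
      = (\<lambda>p. (cmod (shuffle g p))^2)"
    by (auto simp: shuffle_def)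
  ultimately show ?thesis by (simp add: sq_norm_l2_def)
qed

lemma shuffle_inject: "shuffle f = shuffle g \<longleftrightarrow> f = g"
  by (auto simp: shuffle_def fun_eq_iff)

lemma shuffle_diff: "shuffle (\<lambda>q. f q - g q) = (\<lambda>p. shuffle f p - shuffle g p)"
  by (auto simp: shuffle_def fun_eq_iff)

text \<open>The vector \<open>ds \<otimes> (ut \<otimes> vt) + (us \<otimes> vs) \<otimes> dt\<close> of \<open>(E s \<otimes> F s) \<otimes> (E t \<otimes> F t)\<close>,
  with its factors reordered to \<open>(E s \<otimes> E t) \<otimes> (F s \<otimes> F t)\<close>.\<close>

definition reordered_sum :: "('i \<times> 'j \<Rightarrow> complex) \<Rightarrow> ('i \<times> 'j \<Rightarrow> complex) \<Rightarrow> ('i \<Rightarrow> complex)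
    \<Rightarrow> ('i \<Rightarrow> complex) \<Rightarrow> ('j \<Rightarrow> complex) \<Rightarrow> ('j \<Rightarrow> complex) \<Rightarrow> (('i \<times> 'i) \<times> ('j \<times> 'j) \<Rightarrow> complex)" where
  "reordered_sum ds dt us ut vs vt =
     (\<lambda>((i1,i2),(k1,k2)). ds (i1,k1) * ut i2 * vt k2 + us i1 * vs k1 * dt (i2,k2))"

lemma shuffle_reordered_sum:
  "shuffle (reordered_sum ds dt us ut vs vt)
     = (\<lambda>p. tensor_vec ds (tensor_vec ut vt) p + tensor_vec (tensor_vec us vs) dt p)"
  by (auto simp: shuffle_def reordered_sum_def tensor_vec_def fun_eq_iff algebra_simps)

lemma contract_right_reordered_sum:
  fixes ds dt :: "'i \<times> 'j \<Rightarrow> complex" and X :: "'j \<times> 'j \<Rightarrow> complex"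
  assumes ds: "ds \<in> l2" and dt: "dt \<in> l2" and vs: "vs \<in> l2" and vt: "vt \<in> l2" and X: "X \<in> l2"
  shows "contract_right X (reordered_sum ds dt us ut vs vt)
       = (\<lambda>(i1,i2). ut i2 * contract_right (contract_right vt X) ds i1
                   + us i1 * contract_right (contract_left vs X) dt i2)"
proof (rule ext, clarify)
  fix i1 i2
  let ?r = "\<lambda>j. ds (i1,j)" and ?r' = "\<lambda>j. dt (i2,j)"
  have r: "?r \<in> l2" "?r' \<in> l2" using l2_row[OF ds] l2_row[OF dt] by auto
  have t: "tensor_vec ?r vt \<in> l2" "tensor_vec vs ?r' \<in> l2" using l2_tensor_vec r vt vs by blast+
  have row: "(\<lambda>k. reordered_sum ds dt us ut vs vt ((i1,i2),k))
      = (\<lambda>k. ut i2 * tensor_vec ?r vt k + us i1 * tensor_vec vs ?r' k)"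
    by (auto simp: reordered_sum_def tensor_vec_def algebra_simps)
  have inner_r: "inner_l2 X (tensor_vec ?r vt) = contract_right (contract_right vt X) ds i1"
    using inner_l2_contract_right[OF r(1) vt X] inner_l2_commute[of X] inner_l2_commute[of "contract_right vt X"]
    by (simp add: contract_right_def)
  have inner_r': "inner_l2 X (tensor_vec vs ?r') = contract_right (contract_left vs X) dt i2"
    using inner_l2_contract_left[OF vs r(2) X] inner_l2_commute[of X] inner_l2_commute[of "contract_left vs X"]
    by (simp add: contract_right_def)
  show "contract_right X (reordered_sum ds dt us ut vs vt) (i1,i2)
      = ut i2 * contract_right (contract_right vt X) ds i1 + us i1 * contract_right (contract_left vs X) dt i2"
    unfolding contract_right_def[of X] row inner_l2_add_right[OF X l2_scale[OF t(1)] l2_scale[OF t(2)]]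
      inner_l2_scale_right inner_r inner_r' ..
qed

lemma contract_left_reordered_sum:
  fixes ds dt :: "'i \<times> 'j \<Rightarrow> complex" and Y :: "'i \<times> 'i \<Rightarrow> complex"
  assumes ds: "ds \<in> l2" and dt: "dt \<in> l2" and us: "us \<in> l2" and ut: "ut \<in> l2" and Y: "Y \<in> l2"
  shows "contract_left Y (reordered_sum ds dt us ut vs vt)
       = (\<lambda>(k1,k2). vt k2 * contract_left (contract_right ut Y) ds k1
                   + vs k1 * contract_left (contract_left us Y) dt k2)"
proof (rule ext, clarify)
  fix k1 k2
  let ?r = "\<lambda>i. ds (i,k1)" and ?r' = "\<lambda>i. dt (i,k2)"
  have r: "?r \<in> l2" "?r' \<in> l2" using l2_column[OF ds] l2_column[OF dt] by auto
  have t: "tensor_vec ?r ut \<in> l2" "tensor_vec us ?r' \<in> l2" using l2_tensor_vec r ut us by blast+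
  have column: "(\<lambda>i. reordered_sum ds dt us ut vs vt (i,(k1,k2)))
      = (\<lambda>i. vt k2 * tensor_vec ?r ut i + vs k1 * tensor_vec us ?r' i)"
    by (auto simp: reordered_sum_def tensor_vec_def algebra_simps)
  have inner_r: "inner_l2 Y (tensor_vec ?r ut) = contract_left (contract_right ut Y) ds k1"
    using inner_l2_contract_right[OF r(1) ut Y] inner_l2_commute[of Y] inner_l2_commute[of "contract_right ut Y"]
    by (simp add: contract_left_def)
  have inner_r': "inner_l2 Y (tensor_vec us ?r') = contract_left (contract_left us Y) dt k2"
    using inner_l2_contract_left[OF us r(2) Y] inner_l2_commute[of Y] inner_l2_commute[of "contract_left us Y"]
    by (simp add: contract_left_def)
  show "contract_left Y (reordered_sum ds dt us ut vs vt) (k1,k2)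
      = vt k2 * contract_left (contract_right ut Y) ds k1 + vs k1 * contract_left (contract_left us Y) dt k2"
    unfolding contract_left_def[of Y] column inner_l2_add_right[OF Y l2_scale[OF t(1)] l2_scale[OF t(2)]]
      inner_l2_scale_right inner_r inner_r' ..
qed

section \<open>Two spatial product systems\<close>

lemma roots_additive_unit: "a \<in> roots E W u \<Longrightarrow> additive_unit E W u a"
  unfolding roots_def by blast

lemma roots_orthogonal: "a \<in> roots E W u \<Longrightarrow> t > 0 \<Longrightarrow> inner_l2 (a t) (u t) = 0"
  unfolding roots_def by blast

lemma additive_unit_mem: "additive_unit E W u a \<Longrightarrow> t > 0 \<Longrightarrow> a t \<in> E t"
  unfolding additive_unit_def by blast

lemma additive_unit_meas: "additive_unit E W u a \<Longrightarrow> meas_section a"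
  unfolding additive_unit_def by blast

locale spatial_pair =
  fixes E :: "real \<Rightarrow> ('i::countable \<Rightarrow> complex) set"
    and WE :: "real \<Rightarrow> real \<Rightarrow> ('i \<Rightarrow> complex) \<Rightarrow> ('i \<times> 'i \<Rightarrow> complex)"
    and F :: "real \<Rightarrow> ('j::countable \<Rightarrow> complex) set"
    and WF :: "real \<Rightarrow> real \<Rightarrow> ('j \<Rightarrow> complex) \<Rightarrow> ('j \<times> 'j \<Rightarrow> complex)"
    and u :: "real \<Rightarrow> ('i \<Rightarrow> complex)"
    and v :: "real \<Rightarrow> ('j \<Rightarrow> complex)"
  assumes PE: "product_system E WE" and PF: "product_system F WF"
    and NU: "normalized_unit E WE u" and NV: "normalized_unit F WF v"
begin

lemma closed_E: "t > 0 \<Longrightarrow> closed_subspace (E t)"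
  using PE unfolding product_system_def by blast

lemma closed_F: "t > 0 \<Longrightarrow> closed_subspace (F t)"
  using PF unfolding product_system_def by blast

lemma closed_htensor_E: "s > 0 \<Longrightarrow> t > 0 \<Longrightarrow> closed_subspace (htensor (E s) (E t))"
  by (intro closed_subspace_htensor closed_subspace_subset_l2 closed_E)

lemma closed_htensor_F: "s > 0 \<Longrightarrow> t > 0 \<Longrightarrow> closed_subspace (htensor (F s) (F t))"
  by (intro closed_subspace_htensor closed_subspace_subset_l2 closed_F)

lemma closed_htensor: "t > 0 \<Longrightarrow> closed_subspace (htensor (E t) (F t))"
  by (intro closed_subspace_htensor closed_subspace_subset_l2 closed_E closed_F)

lemma unitary_pair_WE_WF:
  assumes "s > 0" "t > 0"
  shows "unitary_pair (E (s+t)) (F (s+t)) (htensor (E s) (E t)) (htensor (F s) (F t)) (WE s t) (WF s t)"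
proof
  show "closed_subspace (E (s+t))" "closed_subspace (F (s+t))" using closed_E closed_F assms by simp_all
  show "closed_subspace (htensor (E s) (E t))" "closed_subspace (htensor (F s) (F t))"
    using closed_htensor_E closed_htensor_F assms by simp_all
  show "unitary_between (E (s+t)) (htensor (E s) (E t)) (WE s t)"
    "unitary_between (F (s+t)) (htensor (F s) (F t)) (WF s t)"
    using PE PF assms unfolding product_system_def by simp_all
qed

lemma tensor_W_eq_shuffle_tensor_op:
  "tensor_W WE WF s t f = shuffle (tensor_op (WE s t) (WF s t) f)"
  by (simp add: tensor_W_def tensor_op_def)

lemma u_mem: "t > 0 \<Longrightarrow> u t \<in> E t"
  using NU unfolding normalized_unit_def is_unit_def by blast

lemma v_mem: "t > 0 \<Longrightarrow> v t \<in> F t"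
  using NV unfolding normalized_unit_def is_unit_def by blast

lemma u_meas: "meas_section u"
  using NU unfolding normalized_unit_def is_unit_def by blast

lemma v_meas: "meas_section v"
  using NV unfolding normalized_unit_def is_unit_def by blast

lemma u_mult: "s > 0 \<Longrightarrow> t > 0 \<Longrightarrow> WE s t (u (s+t)) = tensor_vec (u s) (u t)"
  using NU unfolding normalized_unit_def is_unit_def by blast

lemma v_mult: "s > 0 \<Longrightarrow> t > 0 \<Longrightarrow> WF s t (v (s+t)) = tensor_vec (v s) (v t)"
  using NV unfolding normalized_unit_def is_unit_def by blast

lemma sq_norm_u: "t > 0 \<Longrightarrow> sq_norm_l2 (u t) = 1"
  using NU unfolding normalized_unit_def by (simp add: norm_l2_eq_sqrt)

lemma sq_norm_v: "t > 0 \<Longrightarrow> sq_norm_l2 (v t) = 1"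
  using NV unfolding normalized_unit_def by (simp add: norm_l2_eq_sqrt)

lemma u_l2: "t > 0 \<Longrightarrow> u t \<in> l2"
  using u_mem closed_subspace_mem_l2[OF closed_E] by blast

lemma v_l2: "t > 0 \<Longrightarrow> v t \<in> l2"
  using v_mem closed_subspace_mem_l2[OF closed_F] by blast

lemma inner_u_u: "t > 0 \<Longrightarrow> inner_l2 (u t) (u t) = 1"
  using inner_l2_self[OF u_l2] sq_norm_u by simp

lemma inner_v_v: "t > 0 \<Longrightarrow> inner_l2 (v t) (v t) = 1"
  using inner_l2_self[OF v_l2] sq_norm_v by simp

definition additive_section :: "(real \<Rightarrow> ('i \<times> 'j \<Rightarrow> complex)) \<Rightarrow> bool" where
  "additive_section c \<longleftrightarrow> (\<forall>t>0. c t \<in> htensor (E t) (F t))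
     \<and> (\<forall>s>0. \<forall>t>0. tensor_W WE WF s t (c (s + t))
          = (\<lambda>p. tensor_vec (c s) (tensor_vec (u t) (v t)) p + tensor_vec (tensor_vec (u s) (v s)) (c t) p))"

lemma roots_tensor_iff:
  "c \<in> roots (tensor_spaces E F) (tensor_W WE WF) (tensor_section u v) \<longleftrightarrow>
     meas_section c \<and> additive_section c \<and> (\<forall>t>0. inner_l2 (c t) (tensor_vec (u t) (v t)) = 0)"
  unfolding roots_def additive_unit_def additive_section_def tensor_spaces_def tensor_section_def
  by blast

lemma additive_section_mem: "additive_section c \<Longrightarrow> t > 0 \<Longrightarrow> c t \<in> htensor (E t) (F t)"
  unfolding additive_section_def by blast

lemma additive_section_l2: "additive_section c \<Longrightarrow> t > 0 \<Longrightarrow> c t \<in> l2"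
  using additive_section_mem closed_subspace_mem_l2[OF closed_htensor] by blast

lemma additive_section_tensor_op:
  assumes c: "additive_section c" and s: "s > 0" and t: "t > 0"
  shows "tensor_op (WE s t) (WF s t) (c (s + t)) = reordered_sum (c s) (c t) (u s) (u t) (v s) (v t)"
proof -
  have "shuffle (tensor_op (WE s t) (WF s t) (c (s + t))) = shuffle (reordered_sum (c s) (c t) (u s) (u t) (v s) (v t))"
    using c s t unfolding additive_section_def tensor_W_eq_shuffle_tensor_op shuffle_reordered_sum by simp
  then show ?thesis by (simp only: shuffle_inject)
qed

lemma WE_contract_right_additive:
  assumes c: "additive_section c" and s: "s > 0" and t: "t > 0" and x: "x \<in> F (s + t)"
  shows "WE s t (contract_right x (c (s + t)))
       = (\<lambda>(i1,i2). u t i2 * contract_right (contract_right (v t) (WF s t x)) (c s) i1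
                   + u s i1 * contract_right (contract_left (v s) (WF s t x)) (c t) i2)"
proof -
  interpret unitary_pair "E (s+t)" "F (s+t)" "htensor (E s) (E t)" "htensor (F s) (F t)" "WE s t" "WF s t"
    by (rule unitary_pair_WE_WF[OF s t])
  have st: "s + t > 0" using s t by simp
  show ?thesis
    unfolding WE_contract_right[OF x additive_section_mem[OF c st]] additive_section_tensor_op[OF c s t]
    by (rule contract_right_reordered_sum[OF additive_section_l2[OF c s] additive_section_l2[OF c t]
          v_l2[OF s] v_l2[OF t] WF_l2[OF x]])
qed

lemma WF_contract_left_additive:
  assumes c: "additive_section c" and s: "s > 0" and t: "t > 0" and y: "y \<in> E (s + t)"
  shows "WF s t (contract_left y (c (s + t)))
       = (\<lambda>(k1,k2). v t k2 * contract_left (contract_right (u t) (WE s t y)) (c s) k1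
                   + v s k1 * contract_left (contract_left (u s) (WE s t y)) (c t) k2)"
proof -
  interpret unitary_pair "E (s+t)" "F (s+t)" "htensor (E s) (E t)" "htensor (F s) (F t)" "WE s t" "WF s t"
    by (rule unitary_pair_WE_WF[OF s t])
  have st: "s + t > 0" using s t by simp
  show ?thesis
    unfolding WF_contract_left[OF y additive_section_mem[OF c st]] additive_section_tensor_op[OF c s t]
    by (rule contract_left_reordered_sum[OF additive_section_l2[OF c s] additive_section_l2[OF c t]
          u_l2[OF s] u_l2[OF t] WE_l2[OF y]])
qed

lemma contract_right_root:
  assumes c: "c \<in> roots (tensor_spaces E F) (tensor_W WE WF) (tensor_section u v)"
  shows "(\<lambda>t. contract_right (v t) (c t)) \<in> roots E WE u"
proof -
  have cm: "meas_section c" and ca: "additive_section c"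
    and corth: "\<And>t. t > 0 \<Longrightarrow> inner_l2 (c t) (tensor_vec (u t) (v t)) = 0"
    using c unfolding roots_tensor_iff by blast+
  have mem: "contract_right (v t) (c t) \<in> E t" if "t > 0" for t
    by (rule contract_right_in_htensor[OF closed_E[OF that] closed_F[OF that] v_l2[OF that]
          additive_section_mem[OF ca that]])
  have additive: "WE s t (contract_right (v (s + t)) (c (s + t)))
      = (\<lambda>p. tensor_vec (contract_right (v s) (c s)) (u t) p + tensor_vec (u s) (contract_right (v t) (c t)) p)"
    if s: "s > 0" and t: "t > 0" for s t
  proof -
    have e1: "contract_right (v t) (tensor_vec (v s) (v t)) = v s"
      and e2: "contract_left (v s) (tensor_vec (v s) (v t)) = v t"
      by (simp_all add: contract_right_tensor_vec contract_left_tensor_vec inner_v_v s t)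
    show ?thesis
      unfolding WE_contract_right_additive[OF ca s t v_mem[OF add_pos_pos[OF s t]]] v_mult[OF s t] e1 e2
      by (auto simp: tensor_vec_def mult.commute fun_eq_iff)
  qed
  have orth: "inner_l2 (contract_right (v t) (c t)) (u t) = 0" if t: "t > 0" for t
    using inner_l2_contract_right[OF u_l2 v_l2 additive_section_l2[OF ca], OF t t t] corth[OF t]
      inner_l2_commute[of "contract_right (v t) (c t)" "u t"] inner_l2_commute[of "c t"]
    by simp
  show ?thesis
    unfolding roots_def additive_unit_def
    using meas_section_contract_right[OF cm v_meas additive_section_l2[OF ca] v_l2] mem additive orth
    by blast
qed

lemma contract_left_root:
  assumes c: "c \<in> roots (tensor_spaces E F) (tensor_W WE WF) (tensor_section u v)"
  shows "(\<lambda>t. contract_left (u t) (c t)) \<in> roots F WF v"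
proof -
  have cm: "meas_section c" and ca: "additive_section c"
    and corth: "\<And>t. t > 0 \<Longrightarrow> inner_l2 (c t) (tensor_vec (u t) (v t)) = 0"
    using c unfolding roots_tensor_iff by blast+
  have mem: "contract_left (u t) (c t) \<in> F t" if "t > 0" for t
    by (rule contract_left_in_htensor[OF closed_E[OF that] closed_F[OF that] u_l2[OF that]
          additive_section_mem[OF ca that]])
  have additive: "WF s t (contract_left (u (s + t)) (c (s + t)))
      = (\<lambda>p. tensor_vec (contract_left (u s) (c s)) (v t) p + tensor_vec (v s) (contract_left (u t) (c t)) p)"
    if s: "s > 0" and t: "t > 0" for s t
  proof -
    have e1: "contract_right (u t) (tensor_vec (u s) (u t)) = u s"
      and e2: "contract_left (u s) (tensor_vec (u s) (u t)) = u t"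
      by (simp_all add: contract_right_tensor_vec contract_left_tensor_vec inner_u_u s t)
    show ?thesis
      unfolding WF_contract_left_additive[OF ca s t u_mem[OF add_pos_pos[OF s t]]] u_mult[OF s t] e1 e2
      by (auto simp: tensor_vec_def mult.commute fun_eq_iff)
  qed
  have orth: "inner_l2 (contract_left (u t) (c t)) (v t) = 0" if t: "t > 0" for t
    using inner_l2_contract_left[OF u_l2 v_l2 additive_section_l2[OF ca], OF t t t] corth[OF t]
      inner_l2_commute[of "contract_left (u t) (c t)" "v t"] inner_l2_commute[of "c t"]
    by simp
  show ?thesis
    unfolding roots_def additive_unit_def
    using meas_section_contract_left[OF cm u_meas additive_section_l2[OF ca] u_l2] mem additive orth
    by blast
qed

lemma tensor_W_diff:
  assumes s: "s > 0" and t: "t > 0"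
    and f: "f \<in> htensor (E (s+t)) (F (s+t))" and g: "g \<in> htensor (E (s+t)) (F (s+t))"
  shows "tensor_W WE WF s t (\<lambda>p. f p - g p) = (\<lambda>q. tensor_W WE WF s t f q - tensor_W WE WF s t g q)"
proof -
  interpret unitary_pair "E (s+t)" "F (s+t)" "htensor (E s) (E t)" "htensor (F s) (F t)" "WE s t" "WF s t"
    by (rule unitary_pair_WE_WF[OF s t])
  show ?thesis
    unfolding tensor_W_eq_shuffle_tensor_op bounded_linear_l2_diff[OF closed_subspace_T0 bounded_linear_l2_tensor_op f g]
    by (rule shuffle_diff)
qed

lemma additive_section_diff:
  assumes c: "additive_section c" and d: "additive_section d"
  shows "additive_section (\<lambda>t p. c t p - d t p)"
  unfolding additive_section_def
proof (intro conjI allI impI)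
  show "(\<lambda>p. c t p - d t p) \<in> htensor (E t) (F t)" if "t > 0" for t
    using closed_subspace_diff[OF closed_htensor] additive_section_mem c d that by blast
  fix s t :: real assume s: "s > 0" and t: "t > 0"
  have st: "s + t > 0" using s t by simp
  show "tensor_W WE WF s t (\<lambda>p. c (s + t) p - d (s + t) p)
      = (\<lambda>p. tensor_vec (\<lambda>p. c s p - d s p) (tensor_vec (u t) (v t)) p
           + tensor_vec (tensor_vec (u s) (v s)) (\<lambda>p. c t p - d t p) p)"
    using c d s t
    unfolding tensor_W_diff[OF s t additive_section_mem[OF c st] additive_section_mem[OF d st]]
      additive_section_def
    by (auto simp: tensor_vec_def fun_eq_iff algebra_simps)
qed

lemma additive_section_tensor_sum:
  assumes a: "additive_unit E WE u a" and b: "additive_unit F WF v b"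
  shows "additive_section (\<lambda>t p. tensor_vec (a t) (v t) p + tensor_vec (u t) (b t) p)"
  unfolding additive_section_def
proof (intro conjI allI impI)
  have a_mem: "t > 0 \<Longrightarrow> a t \<in> E t" and b_mem: "t > 0 \<Longrightarrow> b t \<in> F t" for t
    using a b unfolding additive_unit_def by blast+
  show "(\<lambda>p. tensor_vec (a t) (v t) p + tensor_vec (u t) (b t) p) \<in> htensor (E t) (F t)" if t: "t > 0" for t
    by (rule closed_subspace_add[OF closed_htensor[OF t] tensor_vec_in_htensor tensor_vec_in_htensor])
      (simp_all add: a_mem b_mem u_mem v_mem t)
  fix s t :: real assume s: "s > 0" and t: "t > 0"
  interpret unitary_pair "E (s+t)" "F (s+t)" "htensor (E s) (E t)" "htensor (F s) (F t)" "WE s t" "WF s t"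
    by (rule unitary_pair_WE_WF[OF s t])
  have st: "s + t > 0" using s t by simp
  have av: "tensor_vec (a (s+t)) (v (s+t)) \<in> T0" and ub: "tensor_vec (u (s+t)) (b (s+t)) \<in> T0"
    by (simp_all add: tensor_vec_in_htensor a_mem b_mem u_mem v_mem st)
  have a_add: "WE s t (a (s+t)) = (\<lambda>p. tensor_vec (a s) (u t) p + tensor_vec (u s) (a t) p)"
    and b_add: "WF s t (b (s+t)) = (\<lambda>p. tensor_vec (b s) (v t) p + tensor_vec (v s) (b t) p)"
    using a b s t unfolding additive_unit_def by blast+
  show "tensor_W WE WF s t (\<lambda>p. tensor_vec (a (s + t)) (v (s + t)) p + tensor_vec (u (s + t)) (b (s + t)) p)
      = (\<lambda>p. tensor_vec (\<lambda>p. tensor_vec (a s) (v s) p + tensor_vec (u s) (b s) p) (tensor_vec (u t) (v t)) p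
           + tensor_vec (tensor_vec (u s) (v s)) (\<lambda>p. tensor_vec (a t) (v t) p + tensor_vec (u t) (b t) p) p)"
    unfolding tensor_W_eq_shuffle_tensor_op tensor_op_add[OF av ub]
      tensor_op_tensor_vec[OF a_mem[OF st] v_mem[OF st]] tensor_op_tensor_vec[OF u_mem[OF st] b_mem[OF st]]
      a_add b_add u_mult[OF s t] v_mult[OF s t]
    by (auto simp: fun_eq_iff shuffle_def tensor_vec_def algebra_simps)
qed

text \<open>The hypotheses on the partial inner products of \<open>d\<close> say that \<open>d t\<close> is orthogonal to
  \<open>E t \<otimes> v t\<close> and to \<open>u t \<otimes> F t\<close>.\<close>

context
  fixes d :: "real \<Rightarrow> ('i \<times> 'j \<Rightarrow> complex)"
  assumes d_additive: "additive_section d"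
    and d_perp_v: "\<And>t. t > 0 \<Longrightarrow> contract_right (v t) (d t) = (\<lambda>_. 0)"
    and d_perp_u: "\<And>t. t > 0 \<Longrightarrow> contract_left (u t) (d t) = (\<lambda>_. 0)"
begin

private lemma d_l2: "t > 0 \<Longrightarrow> d t \<in> l2"
  by (rule additive_section_l2[OF d_additive])

private lemma sq_norm_d_add:
  assumes s: "s > 0" and t: "t > 0"
  shows "sq_norm_l2 (d (s + t)) = sq_norm_l2 (d s) + sq_norm_l2 (d t)"
proof -
  interpret unitary_pair "E (s+t)" "F (s+t)" "htensor (E s) (E t)" "htensor (F s) (F t)" "WE s t" "WF s t"
    by (rule unitary_pair_WE_WF[OF s t])
  have uv: "r > 0 \<Longrightarrow> tensor_vec (u r) (v r) \<in> l2" for r by (simp add: l2_tensor_vec u_l2 v_l2)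
  have "inner_l2 (tensor_vec (u s) (v s)) (d s) = 0"
    using inner_l2_contract_right[OF u_l2 v_l2 d_l2, OF s s s] d_perp_v[OF s] by simp
  then have "inner_l2 (d s) (tensor_vec (u s) (v s)) = 0" using inner_l2_commute[of "d s"] by simp
  then have perp: "inner_l2 (tensor_vec (d s) (tensor_vec (u t) (v t))) (tensor_vec (tensor_vec (u s) (v s)) (d t)) = 0"
    by (simp add: inner_l2_tensor_vec d_l2 uv s t)
  have "sq_norm_l2 (d (s + t)) = sq_norm_l2 (tensor_W WE WF s t (d (s + t)))"
    unfolding tensor_W_eq_shuffle_tensor_op sq_norm_l2_shuffle
    using sq_norm_tensor_op[OF additive_section_mem[OF d_additive add_pos_pos[OF s t]]] by simp
  also have "\<dots> = sq_norm_l2 (d s) + sq_norm_l2 (d t)"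
    using d_additive s t unfolding additive_section_def
    by (simp add: sq_norm_l2_add_orthogonal[OF _ _ perp] l2_tensor_vec sq_norm_l2_tensor_vec
        d_l2 uv u_l2 v_l2 sq_norm_u sq_norm_v)
  finally show ?thesis .
qed

private lemma sq_norm_d_dyadic:
  assumes r: "r > 0"
  shows "sq_norm_l2 (d r) = 2^n * sq_norm_l2 (d (r / 2^n))"
proof (induction n)
  case (Suc n)
  have q: "r / 2^Suc n > 0" using r by simp
  have "r / 2^n = r / 2^Suc n + r / 2^Suc n" by (simp add: divide_simps)
  then have "sq_norm_l2 (d (r / 2^n)) = 2 * sq_norm_l2 (d (r / 2^Suc n))"
    using sq_norm_d_add[OF q q] by simp
  with Suc.IH show ?case by simp
qed simp

private lemma sq_norm_contract_right_d_add:
  assumes s: "s > 0" and t: "t > 0" and x: "x \<in> F (s + t)"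
  shows "sq_norm_l2 (contract_right x (d (s + t)))
       = sq_norm_l2 (contract_right (contract_right (v t) (WF s t x)) (d s))
         + sq_norm_l2 (contract_right (contract_left (v s) (WF s t x)) (d t))"
proof -
  interpret unitary_pair "E (s+t)" "F (s+t)" "htensor (E s) (E t)" "htensor (F s) (F t)" "WE s t" "WF s t"
    by (rule unitary_pair_WE_WF[OF s t])
  define X where "X = WF s t x"
  define A where "A = contract_right (contract_right (v t) X) (d s)"
  define B where "B = contract_right (contract_left (v s) X) (d t)"
  have X1: "contract_right (v t) X \<in> l2" and X2: "contract_left (v s) X \<in> l2"
    using WF_l2[OF x] by (simp_all add: X_def l2_contract_right l2_contract_left v_l2 s t)
  have A: "A \<in> l2" and B: "B \<in> l2"
    by (simp_all add: A_def B_def l2_contract_right d_l2 X1 X2 s t)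
  have "inner_l2 (u s) A = inner_l2 (contract_right (v t) X) (contract_left (u s) (d s))"
    unfolding A_def
    using inner_l2_contract_right[OF u_l2[OF s] X1 d_l2[OF s]] inner_l2_contract_left[OF u_l2[OF s] X1 d_l2[OF s]]
    by simp
  then have "inner_l2 A (u s) = 0" using d_perp_u[OF s] inner_l2_commute[of A] by simp
  then have perp: "inner_l2 (tensor_vec A (u t)) (tensor_vec (u s) B) = 0"
    by (simp add: inner_l2_tensor_vec A B u_l2 s t)
  have mem: "contract_right x (d (s + t)) \<in> E (s + t)"
    using contract_right_in_htensor[OF E0 F0 closed_subspace_mem_l2[OF F0 x]]
      additive_section_mem[OF d_additive add_pos_pos[OF s t]] .
  have "WE s t (contract_right x (d (s + t))) = (\<lambda>p. tensor_vec A (u t) p + tensor_vec (u s) B p)"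
    unfolding WE_contract_right_additive[OF d_additive s t x]
    by (auto simp: A_def B_def X_def tensor_vec_def mult.commute)
  then have "sq_norm_l2 (contract_right x (d (s + t))) = sq_norm_l2 (\<lambda>p. tensor_vec A (u t) p + tensor_vec (u s) B p)"
    using sq_norm_WE[OF mem] by simp
  also have "\<dots> = sq_norm_l2 A + sq_norm_l2 B"
    by (simp add: sq_norm_l2_add_orthogonal[OF _ _ perp] l2_tensor_vec sq_norm_l2_tensor_vec A B u_l2 sq_norm_u s t)
  finally show ?thesis by (simp add: A_def B_def X_def)
qed

private lemma contract_right_d_residual:
  assumes y: "y \<in> l2" and t: "t > 0"
  shows "contract_right (\<lambda>k. y k - c * v t k) (d t) = contract_right y (d t)"
  using contract_right_add_scale_vec[OF y v_l2[OF t] d_l2[OF t], of "-c"] d_perp_v[OF t] by simp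

text \<open>Bounds \<open>\<parallel>(id \<otimes> \<langle>x|) (d r)\<parallel>\<^sup>2 \<le> C \<parallel>x\<parallel>\<^sup>2\<close> propagate from \<open>s\<close>, \<open>t\<close> to \<open>s + t\<close>,
  by the Bessel inequality applied to \<open>WF s t x\<close> and the unit vectors \<open>v s\<close>, \<open>v t\<close>.\<close>

private lemma contract_right_d_bound_add:
  assumes s: "s > 0" and t: "t > 0" and C: "C \<ge> 0"
    and bound_s: "\<And>x. x \<in> F s \<Longrightarrow> sq_norm_l2 (contract_right x (d s)) \<le> C * sq_norm_l2 x"
    and bound_t: "\<And>x. x \<in> F t \<Longrightarrow> sq_norm_l2 (contract_right x (d t)) \<le> C * sq_norm_l2 x"
    and x: "x \<in> F (s + t)"
  shows "sq_norm_l2 (contract_right x (d (s + t))) \<le> C * sq_norm_l2 x"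
proof -
  interpret unitary_pair "E (s+t)" "F (s+t)" "htensor (E s) (E t)" "htensor (F s) (F t)" "WE s t" "WF s t"
    by (rule unitary_pair_WE_WF[OF s t])
  define X where "X = WF s t x"
  define X1 where "X1 = contract_right (v t) X"
  define X2 where "X2 = contract_left (v s) X"
  define Y1 where "Y1 = (\<lambda>k. X1 k - inner_l2 (v s) X1 * v s k)"
  define Y2 where "Y2 = (\<lambda>k. X2 k - inner_l2 (v t) X2 * v t k)"
  have XT: "X \<in> htensor (F s) (F t)" unfolding X_def by (rule unitary_between_mem[OF UF x])
  have X1F: "X1 \<in> F s" and X2F: "X2 \<in> F t"
    unfolding X1_def X2_def
    by (rule contract_right_in_htensor[OF closed_F[OF s] closed_F[OF t] v_l2[OF t] XT],
        rule contract_left_in_htensor[OF closed_F[OF s] closed_F[OF t] v_l2[OF s] XT])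
  have Y1F: "Y1 \<in> F s" and Y2F: "Y2 \<in> F t"
    unfolding Y1_def Y2_def
    by (rule closed_subspace_diff[OF closed_F[OF s] X1F closed_subspace_scale[OF closed_F[OF s] v_mem[OF s]]],
        rule closed_subspace_diff[OF closed_F[OF t] X2F closed_subspace_scale[OF closed_F[OF t] v_mem[OF t]]])
  have "sq_norm_l2 (contract_right x (d (s + t))) = sq_norm_l2 (contract_right Y1 (d s)) + sq_norm_l2 (contract_right Y2 (d t))"
    unfolding sq_norm_contract_right_d_add[OF s t x] Y1_def Y2_def X1_def X2_def X_def
      contract_right_d_residual[OF closed_subspace_mem_l2[OF closed_F[OF s] X1F[unfolded X1_def X_def]] s]
      contract_right_d_residual[OF closed_subspace_mem_l2[OF closed_F[OF t] X2F[unfolded X2_def X_def]] t] ..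
  also have "\<dots> \<le> C * (sq_norm_l2 Y1 + sq_norm_l2 Y2)"
    using bound_s[OF Y1F] bound_t[OF Y2F] by (simp add: algebra_simps)
  also have "\<dots> \<le> C * sq_norm_l2 X"
    using sq_norm_l2_contract_residuals_le[OF v_l2[OF s] v_l2[OF t] sq_norm_v[OF s] sq_norm_v[OF t] WF_l2[OF x]] C
    unfolding Y1_def Y2_def X1_def X2_def X_def by (rule mult_left_mono)
  finally show ?thesis unfolding X_def sq_norm_WF[OF x] .
qed

private lemma contract_right_d_bound_dyadic:
  assumes r: "r > 0" and x: "x \<in> F r"
  shows "sq_norm_l2 (contract_right x (d r)) \<le> sq_norm_l2 (d (r / 2^n)) * sq_norm_l2 x"
  using r x
proof (induction n arbitrary: r x)
  case 0
  then show ?case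
    using sq_norm_l2_contract_right_le[OF closed_subspace_mem_l2[OF closed_F] d_l2] by (simp add: mult.commute)
next
  case (Suc n)
  have h: "r / 2 > 0" using Suc.prems by simp
  have "sq_norm_l2 (contract_right x (d (r/2 + r/2))) \<le> sq_norm_l2 (d (r / 2^Suc n)) * sq_norm_l2 x"
    by (rule contract_right_d_bound_add[OF h h sq_norm_l2_nonneg])
      (use Suc.IH[OF h] Suc.prems in simp_all)
  then show ?case by simp
qed

private lemma contract_right_d_eq_0:
  assumes t: "t > 0" and x: "x \<in> F t"
  shows "contract_right x (d t) = (\<lambda>_. 0)"
proof -
  have "(\<lambda>n. sq_norm_l2 (d t) * sq_norm_l2 x / 2^n) \<longlonglongrightarrow> 0"
    by (rule LIMSEQ_divide_realpow_zero) simp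
  moreover have "sq_norm_l2 (contract_right x (d t)) \<le> sq_norm_l2 (d t) * sq_norm_l2 x / 2^n" for n
    using contract_right_d_bound_dyadic[OF t x, of n] sq_norm_d_dyadic[OF t, of n] by simp
  ultimately have "sq_norm_l2 (contract_right x (d t)) \<le> 0"
    by (intro LIMSEQ_le_const) auto
  then show ?thesis
    using sq_norm_l2_eq_0 l2_contract_right[OF closed_subspace_mem_l2[OF closed_F[OF t] x] d_l2[OF t]]
      sq_norm_l2_nonneg
    by (metis order_antisym)
qed

text \<open>Rows of \<open>d t\<close> lie in \<open>F t\<close>; pairing \<open>d t\<close> with its own rows gives their square norms.\<close>

lemma additive_section_eq_0: "t > 0 \<Longrightarrow> d t = (\<lambda>_. 0)"
proof (rule ext, clarify)
  fix i j assume t: "t > 0"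
  have row: "(\<lambda>j. d t (i,j)) \<in> F t"
    by (rule row_in_htensor[OF closed_E[OF t] closed_F[OF t] additive_section_mem[OF d_additive t]])
  have "complex_of_real (sq_norm_l2 (\<lambda>j. d t (i,j))) = contract_right (\<lambda>j. d t (i,j)) (d t) i"
    unfolding contract_right_def using inner_l2_self[OF closed_subspace_mem_l2[OF closed_F[OF t] row]] by simp
  also have "\<dots> = 0" using contract_right_d_eq_0[OF t row] by simp
  finally have "(\<lambda>j. d t (i,j)) = (\<lambda>_. 0)"
    using sq_norm_l2_eq_0[OF closed_subspace_mem_l2[OF closed_F[OF t] row]] by simp
  then show "d t (i,j) = 0" by (rule fun_cong)
qed

end

lemma root_decomposition:
  assumes c: "c \<in> roots (tensor_spaces E F) (tensor_W WE WF) (tensor_section u v)" and t: "t > 0"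
  shows "c t = (\<lambda>p. tensor_vec (contract_right (v t) (c t)) (v t) p + tensor_vec (u t) (contract_left (u t) (c t)) p)"
proof -
  define a where "a = (\<lambda>t. contract_right (v t) (c t))"
  define b where "b = (\<lambda>t. contract_left (u t) (c t))"
  define d where "d = (\<lambda>t p. c t p - (tensor_vec (a t) (v t) p + tensor_vec (u t) (b t) p))"
  have ca: "additive_section c" using c unfolding roots_tensor_iff by blast
  have a: "a \<in> roots E WE u" unfolding a_def by (rule contract_right_root[OF c])
  have b: "b \<in> roots F WF v" unfolding b_def by (rule contract_left_root[OF c])
  have a_l2: "a r \<in> l2" and b_l2: "b r \<in> l2" if r: "r > 0" for r
    by (rule closed_subspace_mem_l2[OF closed_E[OF r] additive_unit_mem[OF roots_additive_unit[OF a] r]],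
        rule closed_subspace_mem_l2[OF closed_F[OF r] additive_unit_mem[OF roots_additive_unit[OF b] r]])
  have inner_u_a: "inner_l2 (u r) (a r) = 0" and inner_v_b: "inner_l2 (v r) (b r) = 0" if r: "r > 0" for r
    using roots_orthogonal[OF a r] roots_orthogonal[OF b r] inner_l2_commute[of "u r" "a r"]
      inner_l2_commute[of "v r" "b r"]
    by simp_all
  have sum_l2: "(\<lambda>p. tensor_vec (a r) (v r) p + tensor_vec (u r) (b r) p) \<in> l2" if r: "r > 0" for r
    by (rule l2_add[OF l2_tensor_vec l2_tensor_vec]) (simp_all add: a_l2 b_l2 u_l2 v_l2 r)
  have "additive_section d"
    unfolding d_def
    by (rule additive_section_diff[OF ca additive_section_tensor_sum[OF roots_additive_unit[OF a]
          roots_additive_unit[OF b]]])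
  moreover have "contract_right (v r) (d r) = (\<lambda>_. 0)" if r: "r > 0" for r
    unfolding d_def contract_right_diff[OF v_l2[OF r] additive_section_l2[OF ca r] sum_l2[OF r]]
      contract_right_add[OF v_l2[OF r] l2_tensor_vec[OF a_l2[OF r] v_l2[OF r]] l2_tensor_vec[OF u_l2[OF r] b_l2[OF r]]]
      contract_right_tensor_vec inner_v_v[OF r] inner_v_b[OF r]
    by (simp add: a_def)
  moreover have "contract_left (u r) (d r) = (\<lambda>_. 0)" if r: "r > 0" for r
    unfolding d_def contract_left_diff[OF u_l2[OF r] additive_section_l2[OF ca r] sum_l2[OF r]]
      contract_left_add[OF u_l2[OF r] l2_tensor_vec[OF a_l2[OF r] v_l2[OF r]] l2_tensor_vec[OF u_l2[OF r] b_l2[OF r]]]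
      contract_left_tensor_vec inner_u_u[OF r] inner_u_a[OF r]
    by (simp add: b_def)
  ultimately have "d t = (\<lambda>_. 0)" by (rule additive_section_eq_0[OF _ _ _ t])
  then show ?thesis by (simp add: d_def a_def b_def fun_eq_iff)
qed

lemma additive_section_cong:
  assumes "\<And>t. t > 0 \<Longrightarrow> c t = c' t"
  shows "additive_section c \<longleftrightarrow> additive_section c'"
  unfolding additive_section_def using assms by (simp add: add_pos_pos)

lemma sum_of_roots_in_roots_tensor:
  assumes a: "a \<in> roots E WE u" and b: "b \<in> roots F WF v"
    and c: "\<And>t. t > 0 \<Longrightarrow> c t = (\<lambda>p. tensor_vec (a t) (v t) p + tensor_vec (u t) (b t) p)"
  shows "c \<in> roots (tensor_spaces E F) (tensor_W WE WF) (tensor_section u v)"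
  unfolding roots_tensor_iff
proof (intro conjI allI impI)
  have a_l2: "a t \<in> l2" and b_l2: "b t \<in> l2" if t: "t > 0" for t
    by (rule closed_subspace_mem_l2[OF closed_E[OF t] additive_unit_mem[OF roots_additive_unit[OF a] t]],
        rule closed_subspace_mem_l2[OF closed_F[OF t] additive_unit_mem[OF roots_additive_unit[OF b] t]])
  have "meas_section (\<lambda>t p. tensor_vec (a t) (v t) p + tensor_vec (u t) (b t) p)"
    by (rule meas_section_add[OF meas_section_tensor_vec meas_section_tensor_vec])
      (simp_all add: additive_unit_meas[OF roots_additive_unit[OF a]] additive_unit_meas[OF roots_additive_unit[OF b]]
        u_meas v_meas a_l2 b_l2 u_l2 v_l2 l2_tensor_vec)
  then show "meas_section c"
    using meas_section_cong[of c "\<lambda>t p. tensor_vec (a t) (v t) p + tensor_vec (u t) (b t) p", OF c] by simp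
  have "additive_section (\<lambda>t p. tensor_vec (a t) (v t) p + tensor_vec (u t) (b t) p)"
    by (rule additive_section_tensor_sum[OF roots_additive_unit[OF a] roots_additive_unit[OF b]])
  then show "additive_section c"
    using additive_section_cong[of c "\<lambda>t p. tensor_vec (a t) (v t) p + tensor_vec (u t) (b t) p", OF c] by simp
  show "inner_l2 (c t) (tensor_vec (u t) (v t)) = 0" if t: "t > 0" for t
    unfolding c[OF t] inner_l2_add_left[OF l2_tensor_vec[OF a_l2[OF t] v_l2[OF t]]
      l2_tensor_vec[OF u_l2[OF t] b_l2[OF t]] l2_tensor_vec[OF u_l2[OF t] v_l2[OF t]]]
    by (simp add: inner_l2_tensor_vec a_l2 b_l2 u_l2 v_l2 t roots_orthogonal[OF a t] roots_orthogonal[OF b t])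
qed

end

theorem mainTheorem11:
  fixes E :: "real \<Rightarrow> ('i::countable \<Rightarrow> complex) set"
    and WE :: "real \<Rightarrow> real \<Rightarrow> ('i \<Rightarrow> complex) \<Rightarrow> ('i \<times> 'i \<Rightarrow> complex)"
    and F :: "real \<Rightarrow> ('j::countable \<Rightarrow> complex) set"
    and WF :: "real \<Rightarrow> real \<Rightarrow> ('j \<Rightarrow> complex) \<Rightarrow> ('j \<times> 'j \<Rightarrow> complex)"
    and u :: "real \<Rightarrow> ('i \<Rightarrow> complex)"
    and v :: "real \<Rightarrow> ('j \<Rightarrow> complex)"
  assumes "product_system E WE" and "product_system F WF"
    and "normalized_unit E WE u" and "normalized_unit F WF v"
  shows "\<forall>c. c \<in> roots (tensor_spaces E F) (tensor_W WE WF) (tensor_section u v) \<longleftrightarrow>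
           (\<exists>a \<in> roots E WE u. \<exists>b \<in> roots F WF v.
              \<forall>t>0. c t = (\<lambda>p. tensor_vec (a t) (v t) p + tensor_vec (u t) (b t) p))"
proof -
  interpret spatial_pair E WE F WF u v
    by unfold_locales (rule assms)+
  show ?thesis
  proof (intro allI iffI)
    fix c assume c: "c \<in> roots (tensor_spaces E F) (tensor_W WE WF) (tensor_section u v)"
    show "\<exists>a \<in> roots E WE u. \<exists>b \<in> roots F WF v.
        \<forall>t>0. c t = (\<lambda>p. tensor_vec (a t) (v t) p + tensor_vec (u t) (b t) p)"
      by (intro bexI[OF _ contract_right_root[OF c]] bexI[OF _ contract_left_root[OF c]] allI impI
          root_decomposition[OF c])
  next
    fix c assume "\<exists>a \<in> roots E WE u. \<exists>b \<in> roots F WF v.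
        \<forall>t>0. c t = (\<lambda>p. tensor_vec (a t) (v t) p + tensor_vec (u t) (b t) p)"
    then obtain a b where "a \<in> roots E WE u" "b \<in> roots F WF v"
      "\<And>t. t > 0 \<Longrightarrow> c t = (\<lambda>p. tensor_vec (a t) (v t) p + tensor_vec (u t) (b t) p)"
      by blast
    then show "c \<in> roots (tensor_spaces E F) (tensor_W WE WF) (tensor_section u v)"
      by (rule sum_of_roots_in_roots_tensor)
  qed
qed

end
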